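(* Let $\mathfrak g=G(3)$ with the $\mathbb Z$-grading associated with the parabolic subalgebra $\mathfrak p_{12}^{\rm IV}$ (grading element $\mathsf Z_1+\mathsf Z_2$) and $\mathfrak m=\mathfrak g_-$ its negatively graded part. Then $H^{d,1}(\mathfrak m,\mathfrak g)=0$ for all $d\ge0$.
   Context: $G(3)$: complex exceptional simple Lie superalgebra of dimension $(17|14)$, $\mathfrak g_{\bar0}=G(2)\oplus A(1)$, $\mathfrak g_{\bar1}=\mathbb C^7\boxtimes\mathbb C^2$. With even roots $\pm2\delta,\pm\epsilon_i,\epsilon_i-\epsilon_j$ and odd roots $\pm\delta,\pm\delta\pm\epsilon_i$ ($\epsilon_1+\epsilon_2+\epsilon_3=0$), take simple roots $\alpha_1=\epsilon_2-\epsilon_1,\alpha_2=\epsilon_1-\delta,\alpha_3=\delta$ with dual basis $\mathsf Z_1,\mathsf Z_2,\mathsf Z_3$; the grading is $\mathfrak g_k=\{x:[\mathsf Z_1+\mathsf Z_2,x]=kx\}$, of depth $5$, with $\mathfrak g_-$ of dimension $(6|6)$. $H^{d,1}(\mathfrak m,\mathfrak g)$ is the degree-$d$ component of the first Chevalley–Eilenberg cohomology of $\mathfrak m$ with coefficients in the adjoint module $\mathfrak g$, where $\mathfrak g_j^*$ has degree $-j$. *)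

theory Defs
  imports Complex_Main
begin

text \<open>
  An explicit model of the exceptional simple Lie superalgebra G(3), of dimension (17|14),
  over the complex numbers.  Vectors are functions  nat => complex  supported on {0..<31};
  basis vector i is the indicator of i.  Indices 0..16 are even (g_0 = G(2) + A(1)),
  indices 17..30 are odd (g_1 = C^7 (x) C^2).

  Construction: G(2) is realised as the stabiliser in gl(C^7) of the 3-form
  e1^e2^e3 + e-1^e-2^e-3 + e0^(e1^e-1 + e2^e-2 + e3^e-3) written in a weight basis
  v_0, v_(e1), v_(e2), v_(e3), v_(-e1), v_(-e2), v_(-e3) of C^7;  A(1) = sl(2) acts on
  C^2 = span(s_+, s_-) (weights +delta, -delta);  the odd-odd bracket is
  [u(x)s, v(x)t] = om(s,t) P(u^v) + (2/3) B(u,v) Q(s,t), with B the invariant form on C^7,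
  om the symplectic form on C^2, P the G(2)-projection of so(7), Q(s,t) = s t in sl(2).
  Basis:
0: h1 = diag_V7(0,1,-1,0,-1,1,0) in Cartan of G2 (eps-values (1,-1,0))
1: h2 = diag_V7(0,0,1,-1,0,-1,1) in Cartan of G2 (eps-values (0,1,-1))
2: G2 root vector of root +e1
3: G2 root vector of root -e1
4: G2 root vector of root +e2
5: G2 root vector of root -e2
6: G2 root vector of root +e3
7: G2 root vector of root -e3
8: G2 root vector of root +e1-e2
9: G2 root vector of root +e1-e3
10: G2 root vector of root -e1+e2
11: G2 root vector of root +e2-e3
12: G2 root vector of root -e1+e3
13: G2 root vector of root -e2+e3
14: sl2 element H (eigenvalue 2delta on E)
15: sl2 element E (root 2delta)
16: sl2 element F (root -2delta)
17: odd vector v_(0) (x) s_(+), weight 0 + delta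
18: odd vector v_(0) (x) s_(-), weight 0 - delta
19: odd vector v_(e1) (x) s_(+), weight e1 + delta
20: odd vector v_(e1) (x) s_(-), weight e1 - delta
21: odd vector v_(e2) (x) s_(+), weight e2 + delta
22: odd vector v_(e2) (x) s_(-), weight e2 - delta
23: odd vector v_(e3) (x) s_(+), weight e3 + delta
24: odd vector v_(e3) (x) s_(-), weight e3 - delta
25: odd vector v_(-e1) (x) s_(+), weight -e1 + delta
26: odd vector v_(-e1) (x) s_(-), weight -e1 - delta
27: odd vector v_(-e2) (x) s_(+), weight -e2 + delta
28: odd vector v_(-e2) (x) s_(-), weight -e2 - delta
29: odd vector v_(-e3) (x) s_(+), weight -e3 + delta
30: odd vector v_(-e3) (x) s_(-), weight -e3 - delta

  The Cartan subalgebra is spanned by basis vectors 0, 1, 14; the roots are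
  +-2delta, +-e_i, e_i - e_j (even) and +-delta, +-delta +- e_i (odd), e1+e2+e3 = 0.
  With simple roots a1 = e2 - e1, a2 = e1 - delta, a3 = delta and dual basis Z1, Z2, Z3,
  the grading element Z1 + Z2 is the Cartan element taking the values
  e1 -> 1, e2 -> 2, e3 -> -3, delta -> 0, namely h1 + 3 h2 (basis vectors 0 and 1).
\<close>

type_synonym g3vec = "nat \<Rightarrow> complex"

text \<open>Nonzero structure constants (i, j, k, p, q):  [e_i, e_j] has e_k-coefficient p/q.\<close>
definition g3_table :: "(nat \<times> nat \<times> nat \<times> int \<times> int) list" where
  "g3_table = [
   (0, 2, 2, 1, 1),
   (0, 3, 3, -1, 1),
   (0, 4, 4, -1, 1),
   (0, 5, 5, 1, 1),
   (0, 8, 8, 2, 1),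
   (0, 9, 9, 1, 1),
   (0, 10, 10, -2, 1),
   (0, 11, 11, -1, 1),
   (0, 12, 12, -1, 1),
   (0, 13, 13, 1, 1),
   (0, 19, 19, 1, 1),
   (0, 20, 20, 1, 1),
   (0, 21, 21, -1, 1),
   (0, 22, 22, -1, 1),
   (0, 25, 25, -1, 1),
   (0, 26, 26, -1, 1),
   (0, 27, 27, 1, 1),
   (0, 28, 28, 1, 1),
   (1, 4, 4, 1, 1),
   (1, 5, 5, -1, 1),
   (1, 6, 6, -1, 1),
   (1, 7, 7, 1, 1),
   (1, 8, 8, -1, 1),
   (1, 9, 9, 1, 1),
   (1, 10, 10, 1, 1),
   (1, 11, 11, 2, 1),
   (1, 12, 12, -1, 1),
   (1, 13, 13, -2, 1),
   (1, 21, 21, 1, 1),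
   (1, 22, 22, 1, 1),
   (1, 23, 23, -1, 1),
   (1, 24, 24, -1, 1),
   (1, 27, 27, -1, 1),
   (1, 28, 28, -1, 1),
   (1, 29, 29, 1, 1),
   (1, 30, 30, 1, 1),
   (2, 0, 2, -1, 1),
   (2, 3, 0, 1, 1),
   (2, 3, 1, 1, 2),
   (2, 4, 7, -4, 1),
   (2, 5, 8, -3, 2),
   (2, 6, 5, -4, 1),
   (2, 7, 9, -3, 2),
   (2, 10, 4, -1, 1),
   (2, 12, 6, 1, 1),
   (2, 17, 19, 2, 1),
   (2, 18, 20, 2, 1),
   (2, 21, 29, 1, 1),
   (2, 22, 30, 1, 1),
   (2, 23, 27, -1, 1),
   (2, 24, 28, -1, 1),
   (2, 25, 17, 1, 1),
   (2, 26, 18, 1, 1),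
   (3, 0, 3, 1, 1),
   (3, 2, 0, -1, 1),
   (3, 2, 1, -1, 2),
   (3, 4, 10, -3, 2),
   (3, 5, 6, -1, 2),
   (3, 6, 12, 3, 2),
   (3, 7, 4, -1, 2),
   (3, 8, 5, -1, 1),
   (3, 9, 7, -1, 1),
   (3, 17, 25, 1, 1),
   (3, 18, 26, 1, 1),
   (3, 19, 17, 1, 2),
   (3, 20, 18, 1, 2),
   (3, 27, 23, -1, 2),
   (3, 28, 24, -1, 2),
   (3, 29, 21, 1, 2),
   (3, 30, 22, 1, 2),
   (4, 0, 4, 1, 1),
   (4, 1, 4, -1, 1),
   (4, 2, 7, 4, 1),
   (4, 3, 10, 3, 2),
   (4, 5, 0, 1, 2),
   (4, 5, 1, -1, 2),
   (4, 6, 3, -4, 1),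
   (4, 7, 11, 3, 2),
   (4, 8, 2, -1, 1),
   (4, 13, 6, -1, 1),
   (4, 17, 21, -2, 1),
   (4, 18, 22, -2, 1),
   (4, 19, 29, 1, 1),
   (4, 20, 30, 1, 1),
   (4, 23, 25, -1, 1),
   (4, 24, 26, -1, 1),
   (4, 27, 17, -1, 1),
   (4, 28, 18, -1, 1),
   (5, 0, 5, -1, 1),
   (5, 1, 5, 1, 1),
   (5, 2, 8, 3, 2),
   (5, 3, 6, 1, 2),
   (5, 4, 0, -1, 2),
   (5, 4, 1, 1, 2),
   (5, 6, 13, 3, 2),
   (5, 7, 2, -1, 2),
   (5, 10, 3, -1, 1),
   (5, 11, 7, -1, 1),
   (5, 17, 27, 1, 1),
   (5, 18, 28, 1, 1),
   (5, 21, 17, 1, 2),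
   (5, 22, 18, 1, 2),
   (5, 25, 23, 1, 2),
   (5, 26, 24, 1, 2),
   (5, 29, 19, -1, 2),
   (5, 30, 20, -1, 2),
   (6, 1, 6, 1, 1),
   (6, 2, 5, 4, 1),
   (6, 3, 12, -3, 2),
   (6, 4, 3, 4, 1),
   (6, 5, 13, -3, 2),
   (6, 7, 0, -1, 2),
   (6, 7, 1, -1, 1),
   (6, 9, 2, 1, 1),
   (6, 11, 4, -1, 1),
   (6, 17, 23, 2, 1),
   (6, 18, 24, 2, 1),
   (6, 19, 27, 1, 1),
   (6, 20, 28, 1, 1),
   (6, 21, 25, -1, 1),
   (6, 22, 26, -1, 1),
   (6, 29, 17, 1, 1),
   (6, 30, 18, 1, 1),
   (7, 1, 7, -1, 1),
   (7, 2, 9, 3, 2),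
   (7, 3, 4, 1, 2),
   (7, 4, 11, -3, 2),
   (7, 5, 2, 1, 2),
   (7, 6, 0, 1, 2),
   (7, 6, 1, 1, 1),
   (7, 12, 3, -1, 1),
   (7, 13, 5, -1, 1),
   (7, 17, 29, 1, 1),
   (7, 18, 30, 1, 1),
   (7, 23, 17, 1, 2),
   (7, 24, 18, 1, 2),
   (7, 25, 21, -1, 2),
   (7, 26, 22, -1, 2),
   (7, 27, 19, 1, 2),
   (7, 28, 20, 1, 2),
   (8, 0, 8, -2, 1),
   (8, 1, 8, 1, 1),
   (8, 3, 5, 1, 1),
   (8, 4, 2, 1, 1),
   (8, 10, 0, 1, 1),
   (8, 11, 9, -1, 1),
   (8, 12, 13, 1, 1),
   (8, 21, 19, -1, 1),
   (8, 22, 20, -1, 1),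
   (8, 25, 27, 1, 1),
   (8, 26, 28, 1, 1),
   (9, 0, 9, -1, 1),
   (9, 1, 9, -1, 1),
   (9, 3, 7, 1, 1),
   (9, 6, 2, -1, 1),
   (9, 10, 11, 1, 1),
   (9, 12, 0, 1, 1),
   (9, 12, 1, 1, 1),
   (9, 13, 8, -1, 1),
   (9, 23, 19, -1, 1),
   (9, 24, 20, -1, 1),
   (9, 25, 29, 1, 1),
   (9, 26, 30, 1, 1),
   (10, 0, 10, 2, 1),
   (10, 1, 10, -1, 1),
   (10, 2, 4, 1, 1),
   (10, 5, 3, 1, 1),
   (10, 8, 0, -1, 1),
   (10, 9, 11, -1, 1),
   (10, 13, 12, 1, 1),
   (10, 19, 21, -1, 1),
   (10, 20, 22, -1, 1),
   (10, 27, 25, 1, 1),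
   (10, 28, 26, 1, 1),
   (11, 0, 11, 1, 1),
   (11, 1, 11, -2, 1),
   (11, 5, 7, 1, 1),
   (11, 6, 4, 1, 1),
   (11, 8, 9, 1, 1),
   (11, 12, 10, -1, 1),
   (11, 13, 1, 1, 1),
   (11, 23, 21, -1, 1),
   (11, 24, 22, -1, 1),
   (11, 27, 29, 1, 1),
   (11, 28, 30, 1, 1),
   (12, 0, 12, 1, 1),
   (12, 1, 12, 1, 1),
   (12, 2, 6, -1, 1),
   (12, 7, 3, 1, 1),
   (12, 8, 13, -1, 1),
   (12, 9, 0, -1, 1),
   (12, 9, 1, -1, 1),
   (12, 11, 10, 1, 1),
   (12, 19, 23, -1, 1),
   (12, 20, 24, -1, 1),
   (12, 29, 25, 1, 1),
   (12, 30, 26, 1, 1),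
   (13, 0, 13, -1, 1),
   (13, 1, 13, 2, 1),
   (13, 4, 6, 1, 1),
   (13, 7, 5, 1, 1),
   (13, 9, 8, 1, 1),
   (13, 10, 12, -1, 1),
   (13, 11, 1, -1, 1),
   (13, 21, 23, -1, 1),
   (13, 22, 24, -1, 1),
   (13, 29, 27, 1, 1),
   (13, 30, 28, 1, 1),
   (14, 15, 15, 2, 1),
   (14, 16, 16, -2, 1),
   (14, 17, 17, 1, 1),
   (14, 18, 18, -1, 1),
   (14, 19, 19, 1, 1),
   (14, 20, 20, -1, 1),
   (14, 21, 21, 1, 1),
   (14, 22, 22, -1, 1),
   (14, 23, 23, 1, 1),
   (14, 24, 24, -1, 1),
   (14, 25, 25, 1, 1),
   (14, 26, 26, -1, 1),
   (14, 27, 27, 1, 1),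
   (14, 28, 28, -1, 1),
   (14, 29, 29, 1, 1),
   (14, 30, 30, -1, 1),
   (15, 14, 15, -2, 1),
   (15, 16, 14, 1, 1),
   (15, 18, 17, 1, 1),
   (15, 20, 19, 1, 1),
   (15, 22, 21, 1, 1),
   (15, 24, 23, 1, 1),
   (15, 26, 25, 1, 1),
   (15, 28, 27, 1, 1),
   (15, 30, 29, 1, 1),
   (16, 14, 16, 2, 1),
   (16, 15, 14, -1, 1),
   (16, 17, 18, 1, 1),
   (16, 19, 20, 1, 1),
   (16, 21, 22, 1, 1),
   (16, 23, 24, 1, 1),
   (16, 25, 26, 1, 1),
   (16, 27, 28, 1, 1),
   (16, 29, 30, 1, 1),
   (17, 2, 19, -2, 1),
   (17, 3, 25, -1, 1),
   (17, 4, 21, 2, 1),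
   (17, 5, 27, -1, 1),
   (17, 6, 23, -2, 1),
   (17, 7, 29, -1, 1),
   (17, 14, 17, -1, 1),
   (17, 16, 18, -1, 1),
   (17, 17, 15, -8, 3),
   (17, 18, 14, 4, 3),
   (17, 20, 2, 2, 3),
   (17, 22, 4, -2, 3),
   (17, 24, 6, 2, 3),
   (17, 26, 3, 4, 3),
   (17, 28, 5, 4, 3),
   (17, 30, 7, 4, 3),
   (18, 2, 20, -2, 1),
   (18, 3, 26, -1, 1),
   (18, 4, 22, 2, 1),
   (18, 5, 28, -1, 1),
   (18, 6, 24, -2, 1),
   (18, 7, 30, -1, 1),
   (18, 14, 18, 1, 1),
   (18, 15, 17, -1, 1),
   (18, 17, 14, 4, 3),
   (18, 18, 16, 8, 3),
   (18, 19, 2, -2, 3),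
   (18, 21, 4, 2, 3),
   (18, 23, 6, -2, 3),
   (18, 25, 3, -4, 3),
   (18, 27, 5, -4, 3),
   (18, 29, 7, -4, 3),
   (19, 0, 19, -1, 1),
   (19, 3, 17, -1, 2),
   (19, 4, 29, -1, 1),
   (19, 6, 27, -1, 1),
   (19, 10, 21, 1, 1),
   (19, 12, 23, 1, 1),
   (19, 14, 19, -1, 1),
   (19, 16, 20, -1, 1),
   (19, 18, 2, -2, 3),
   (19, 22, 7, 2, 3),
   (19, 24, 5, -2, 3),
   (19, 25, 15, 4, 3),
   (19, 26, 0, 2, 3),
   (19, 26, 1, 1, 3),
   (19, 26, 14, -2, 3),
   (19, 28, 8, -1, 1),
   (19, 30, 9, -1, 1),
   (20, 0, 20, -1, 1),
   (20, 3, 18, -1, 2),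
   (20, 4, 30, -1, 1),
   (20, 6, 28, -1, 1),
   (20, 10, 22, 1, 1),
   (20, 12, 24, 1, 1),
   (20, 14, 20, 1, 1),
   (20, 15, 19, -1, 1),
   (20, 17, 2, 2, 3),
   (20, 21, 7, -2, 3),
   (20, 23, 5, 2, 3),
   (20, 25, 0, -2, 3),
   (20, 25, 1, -1, 3),
   (20, 25, 14, -2, 3),
   (20, 26, 16, -4, 3),
   (20, 27, 8, 1, 1),
   (20, 29, 9, 1, 1),
   (21, 0, 21, 1, 1),
   (21, 1, 21, -1, 1),
   (21, 2, 29, -1, 1),
   (21, 5, 17, -1, 2),
   (21, 6, 25, 1, 1),
   (21, 8, 19, 1, 1),
   (21, 13, 23, 1, 1),
   (21, 14, 21, -1, 1),
   (21, 16, 22, -1, 1),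
   (21, 18, 4, 2, 3),
   (21, 20, 7, -2, 3),
   (21, 24, 3, 2, 3),
   (21, 26, 10, -1, 1),
   (21, 27, 15, 4, 3),
   (21, 28, 0, -1, 3),
   (21, 28, 1, 1, 3),
   (21, 28, 14, -2, 3),
   (21, 30, 11, -1, 1),
   (22, 0, 22, 1, 1),
   (22, 1, 22, -1, 1),
   (22, 2, 30, -1, 1),
   (22, 5, 18, -1, 2),
   (22, 6, 26, 1, 1),
   (22, 8, 20, 1, 1),
   (22, 13, 24, 1, 1),
   (22, 14, 22, 1, 1),
   (22, 15, 21, -1, 1),
   (22, 17, 4, -2, 3),
   (22, 19, 7, 2, 3),
   (22, 23, 3, -2, 3),
   (22, 25, 10, 1, 1),
   (22, 27, 0, 1, 3),
   (22, 27, 1, -1, 3),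
   (22, 27, 14, -2, 3),
   (22, 28, 16, -4, 3),
   (22, 29, 11, 1, 1),
   (23, 1, 23, 1, 1),
   (23, 2, 27, 1, 1),
   (23, 4, 25, 1, 1),
   (23, 7, 17, -1, 2),
   (23, 9, 19, 1, 1),
   (23, 11, 21, 1, 1),
   (23, 14, 23, -1, 1),
   (23, 16, 24, -1, 1),
   (23, 18, 6, -2, 3),
   (23, 20, 5, 2, 3),
   (23, 22, 3, -2, 3),
   (23, 26, 12, -1, 1),
   (23, 28, 13, -1, 1),
   (23, 29, 15, 4, 3),
   (23, 30, 0, -1, 3),
   (23, 30, 1, -2, 3),
   (23, 30, 14, -2, 3),
   (24, 1, 24, 1, 1),
   (24, 2, 28, 1, 1),
   (24, 4, 26, 1, 1),
   (24, 7, 18, -1, 2),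
   (24, 9, 20, 1, 1),
   (24, 11, 22, 1, 1),
   (24, 14, 24, 1, 1),
   (24, 15, 23, -1, 1),
   (24, 17, 6, 2, 3),
   (24, 19, 5, -2, 3),
   (24, 21, 3, 2, 3),
   (24, 25, 12, 1, 1),
   (24, 27, 13, 1, 1),
   (24, 29, 0, 1, 3),
   (24, 29, 1, 2, 3),
   (24, 29, 14, -2, 3),
   (24, 30, 16, -4, 3),
   (25, 0, 25, 1, 1),
   (25, 2, 17, -1, 1),
   (25, 5, 23, -1, 2),
   (25, 7, 21, 1, 2),
   (25, 8, 27, -1, 1),
   (25, 9, 29, -1, 1),
   (25, 14, 25, -1, 1),
   (25, 16, 26, -1, 1),
   (25, 18, 3, -4, 3),
   (25, 19, 15, 4, 3),
   (25, 20, 0, -2, 3),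
   (25, 20, 1, -1, 3),
   (25, 20, 14, -2, 3),
   (25, 22, 10, 1, 1),
   (25, 24, 12, 1, 1),
   (25, 28, 6, -1, 3),
   (25, 30, 4, -1, 3),
   (26, 0, 26, 1, 1),
   (26, 2, 18, -1, 1),
   (26, 5, 24, -1, 2),
   (26, 7, 22, 1, 2),
   (26, 8, 28, -1, 1),
   (26, 9, 30, -1, 1),
   (26, 14, 26, 1, 1),
   (26, 15, 25, -1, 1),
   (26, 17, 3, 4, 3),
   (26, 19, 0, 2, 3),
   (26, 19, 1, 1, 3),
   (26, 19, 14, -2, 3),
   (26, 20, 16, -4, 3),
   (26, 21, 10, -1, 1),
   (26, 23, 12, -1, 1),
   (26, 27, 6, 1, 3),
   (26, 29, 4, 1, 3),
   (27, 0, 27, -1, 1),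
   (27, 1, 27, 1, 1),
   (27, 3, 23, 1, 2),
   (27, 4, 17, 1, 1),
   (27, 7, 19, -1, 2),
   (27, 10, 25, -1, 1),
   (27, 11, 29, -1, 1),
   (27, 14, 27, -1, 1),
   (27, 16, 28, -1, 1),
   (27, 18, 5, -4, 3),
   (27, 20, 8, 1, 1),
   (27, 21, 15, 4, 3),
   (27, 22, 0, 1, 3),
   (27, 22, 1, -1, 3),
   (27, 22, 14, -2, 3),
   (27, 24, 13, 1, 1),
   (27, 26, 6, 1, 3),
   (27, 30, 2, -1, 3),
   (28, 0, 28, -1, 1),
   (28, 1, 28, 1, 1),
   (28, 3, 24, 1, 2),
   (28, 4, 18, 1, 1),
   (28, 7, 20, -1, 2),
   (28, 10, 26, -1, 1),
   (28, 11, 30, -1, 1),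
   (28, 14, 28, 1, 1),
   (28, 15, 27, -1, 1),
   (28, 17, 5, 4, 3),
   (28, 19, 8, -1, 1),
   (28, 21, 0, -1, 3),
   (28, 21, 1, 1, 3),
   (28, 21, 14, -2, 3),
   (28, 22, 16, -4, 3),
   (28, 23, 13, -1, 1),
   (28, 25, 6, -1, 3),
   (28, 29, 2, 1, 3),
   (29, 1, 29, -1, 1),
   (29, 3, 21, -1, 2),
   (29, 5, 19, 1, 2),
   (29, 6, 17, -1, 1),
   (29, 12, 25, -1, 1),
   (29, 13, 27, -1, 1),
   (29, 14, 29, -1, 1),
   (29, 16, 30, -1, 1),
   (29, 18, 7, -4, 3),
   (29, 20, 9, 1, 1),
   (29, 22, 11, 1, 1),
   (29, 23, 15, 4, 3),
   (29, 24, 0, 1, 3),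
   (29, 24, 1, 2, 3),
   (29, 24, 14, -2, 3),
   (29, 26, 4, 1, 3),
   (29, 28, 2, 1, 3),
   (30, 1, 30, -1, 1),
   (30, 3, 22, -1, 2),
   (30, 5, 20, 1, 2),
   (30, 6, 18, -1, 1),
   (30, 12, 26, -1, 1),
   (30, 13, 28, -1, 1),
   (30, 14, 30, 1, 1),
   (30, 15, 29, -1, 1),
   (30, 17, 7, 4, 3),
   (30, 19, 9, -1, 1),
   (30, 21, 11, -1, 1),
   (30, 23, 0, -1, 3),
   (30, 23, 1, -2, 3),
   (30, 23, 14, -2, 3),
   (30, 24, 16, -4, 3),
   (30, 25, 4, -1, 3),
   (30, 27, 2, -1, 3)
  ]"

definition g3_sc :: "nat \<Rightarrow> nat \<Rightarrow> nat \<Rightarrow> complex" where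
  "g3_sc i j k = sum_list (map (\<lambda>(a, b, c, p, q).
      if a = i \<and> b = j \<and> c = k then of_int p / of_int q else 0) g3_table)"

definition g3_space :: "g3vec set" where
  "g3_space = {x. \<forall>i\<ge>31. x i = 0}"

definition g3_par :: "nat \<Rightarrow> nat" where
  "g3_par i = (if i < 17 then 0 else 1)"

definition g3_hom :: "nat \<Rightarrow> g3vec set" where
  "g3_hom p = {x \<in> g3_space. \<forall>i. g3_par i \<noteq> p \<longrightarrow> x i = 0}"

definition g3_ppart :: "nat \<Rightarrow> g3vec \<Rightarrow> g3vec" where
  "g3_ppart p x = (\<lambda>i. if i < 31 \<and> g3_par i = p then x i else 0)"

definition g3_br :: "g3vec \<Rightarrow> g3vec \<Rightarrow> g3vec" where
  "g3_br x y = (\<lambda>k. if k < 31 then (\<Sum>i<31. \<Sum>j<31. x i * y j * g3_sc i j k) else 0)"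

definition g3_Z :: g3vec where
  "g3_Z = (\<lambda>i. if i = 0 then 1 else if i = 1 then 3 else 0)"

definition g3_grade :: "int \<Rightarrow> g3vec set" where
  "g3_grade k = {x \<in> g3_space. g3_br g3_Z x = (\<lambda>i. of_int k * x i)}"

definition g3_m :: "g3vec set" where
  "g3_m = {x. \<exists>S f. finite S \<and> S \<subseteq> {k. k < 0} \<and> (\<forall>k\<in>S. f k \<in> g3_grade k)
                 \<and> x = (\<lambda>i. \<Sum>k\<in>S. f k i)}"

text \<open>Degree-d 1-cochains: complex-linear maps m -> g sending m \<inter> g_j into g_(j+d)
  (g_j^* has degree -j).\<close>
definition g3_C1 :: "int \<Rightarrow> (g3vec \<Rightarrow> g3vec) set" where
  "g3_C1 d = {\<phi>. (\<forall>x\<in>g3_m. \<phi> x \<in> g3_space)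
     \<and> (\<forall>x\<in>g3_m. \<forall>y\<in>g3_m. \<phi> (\<lambda>i. x i + y i) = (\<lambda>i. \<phi> x i + \<phi> y i))
     \<and> (\<forall>x\<in>g3_m. \<forall>c::complex. \<phi> (\<lambda>i. c * x i) = (\<lambda>i. c * \<phi> x i))
     \<and> (\<forall>j<0. \<forall>x\<in>g3_grade j. \<phi> x \<in> g3_grade (j + d))}"

definition g3_d0 :: "g3vec \<Rightarrow> nat \<Rightarrow> g3vec \<Rightarrow> g3vec" where
  "g3_d0 v a x = (\<lambda>i. \<Sum>p\<in>{0,1::nat}. (-1) ^ (a * p) * g3_br x (g3_ppart p v) i)"

text \<open>Chevalley--Eilenberg differential on 1-cochains, evaluated on homogeneous x (parity a),
  y (parity b); phi is split into its parity components phi_p (phi_p(x) = parity-(a+p) part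
  of phi(x)):
  (d phi)(x,y) = sum_p [ (-1)^(a p) [x, phi_p y] - (-1)^(b (a+p)) [y, phi_p x] ] - phi [x,y].\<close>
definition g3_d1 :: "(g3vec \<Rightarrow> g3vec) \<Rightarrow> nat \<Rightarrow> nat \<Rightarrow> g3vec \<Rightarrow> g3vec \<Rightarrow> g3vec" where
  "g3_d1 \<phi> a b x y = (\<lambda>i.
      (\<Sum>p\<in>{0,1::nat}.
          (-1) ^ (a * p) * g3_br x (g3_ppart ((b + p) mod 2) (\<phi> y)) i
        - (-1) ^ (b * (a + p)) * g3_br y (g3_ppart ((a + p) mod 2) (\<phi> x)) i)
      - \<phi> (g3_br x y) i)"

definition g3_Z1 :: "int \<Rightarrow> (g3vec \<Rightarrow> g3vec) set" where
  "g3_Z1 d = {\<phi> \<in> g3_C1 d. \<forall>a\<in>{0,1}. \<forall>b\<in>{0,1}. \<forall>x\<in>g3_m \<inter> g3_hom a. \<forall>y\<in>g3_m \<inter> g3_hom b.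
                g3_d1 \<phi> a b x y = (\<lambda>_. 0)}"

definition g3_B1 :: "int \<Rightarrow> (g3vec \<Rightarrow> g3vec) set" where
  "g3_B1 d = {\<phi> \<in> g3_C1 d. \<exists>v\<in>g3_grade d. \<forall>a\<in>{0,1}. \<forall>x\<in>g3_m \<inter> g3_hom a. \<phi> x = g3_d0 v a x}"

end

theory Submission
  imports Defs
begin

(* A degree-d cochain is determined by its matrix F i n = phi(e_i)_n on the twelve basis vectors
   e_i of m, and the cocycle condition becomes a finite system of linear equations with rational
   coefficients given by the structure constants.  The degrees of G(3) lie in [-5, 5] and those of
   m in [-5, -1], so nothing happens for d > 10.  For 0 <= d <= 10 a primitive v in g_d is read off
   from a few entries of F (v = 0 for d >= 6, where g_d = 0), and every other entry is shown to
   agree with the coefficient of d v by linear arithmetic from a handful of explicitly chosen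
   cocycle equations.  Linear arithmetic needs an ordered field, so the system is solved
   separately for the real and imaginary parts of a complex cocycle. *)

(* Computing the rows of g3_table by filtering is too slow for the simplifier, so they are
   listed explicitly and checked against the table. *)
definition g3_rows :: "(nat \<times> nat \<times> nat \<times> int \<times> int) list list" where
  "g3_rows = [
    [(0, 2, 2, 1, 1), (0, 3, 3, -1, 1), (0, 4, 4, -1, 1), (0, 5, 5, 1, 1), (0, 8, 8, 2, 1), (0, 9, 9, 1, 1), (0, 10, 10, -2, 1), (0, 11, 11, -1, 1), (0, 12, 12, -1, 1), (0, 13, 13, 1, 1), (0, 19, 19, 1, 1), (0, 20, 20, 1, 1), (0, 21, 21, -1, 1), (0, 22, 22, -1, 1), (0, 25, 25, -1, 1), (0, 26, 26, -1, 1), (0, 27, 27, 1, 1), (0, 28, 28, 1, 1)],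
    [(1, 4, 4, 1, 1), (1, 5, 5, -1, 1), (1, 6, 6, -1, 1), (1, 7, 7, 1, 1), (1, 8, 8, -1, 1), (1, 9, 9, 1, 1), (1, 10, 10, 1, 1), (1, 11, 11, 2, 1), (1, 12, 12, -1, 1), (1, 13, 13, -2, 1), (1, 21, 21, 1, 1), (1, 22, 22, 1, 1), (1, 23, 23, -1, 1), (1, 24, 24, -1, 1), (1, 27, 27, -1, 1), (1, 28, 28, -1, 1), (1, 29, 29, 1, 1), (1, 30, 30, 1, 1)],
    [(2, 0, 2, -1, 1), (2, 3, 0, 1, 1), (2, 3, 1, 1, 2), (2, 4, 7, -4, 1), (2, 5, 8, -3, 2), (2, 6, 5, -4, 1), (2, 7, 9, -3, 2), (2, 10, 4, -1, 1), (2, 12, 6, 1, 1), (2, 17, 19, 2, 1), (2, 18, 20, 2, 1), (2, 21, 29, 1, 1), (2, 22, 30, 1, 1), (2, 23, 27, -1, 1), (2, 24, 28, -1, 1), (2, 25, 17, 1, 1), (2, 26, 18, 1, 1)],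
    [(3, 0, 3, 1, 1), (3, 2, 0, -1, 1), (3, 2, 1, -1, 2), (3, 4, 10, -3, 2), (3, 5, 6, -1, 2), (3, 6, 12, 3, 2), (3, 7, 4, -1, 2), (3, 8, 5, -1, 1), (3, 9, 7, -1, 1), (3, 17, 25, 1, 1), (3, 18, 26, 1, 1), (3, 19, 17, 1, 2), (3, 20, 18, 1, 2), (3, 27, 23, -1, 2), (3, 28, 24, -1, 2), (3, 29, 21, 1, 2), (3, 30, 22, 1, 2)],
    [(4, 0, 4, 1, 1), (4, 1, 4, -1, 1), (4, 2, 7, 4, 1), (4, 3, 10, 3, 2), (4, 5, 0, 1, 2), (4, 5, 1, -1, 2), (4, 6, 3, -4, 1), (4, 7, 11, 3, 2), (4, 8, 2, -1, 1), (4, 13, 6, -1, 1), (4, 17, 21, -2, 1), (4, 18, 22, -2, 1), (4, 19, 29, 1, 1), (4, 20, 30, 1, 1), (4, 23, 25, -1, 1), (4, 24, 26, -1, 1), (4, 27, 17, -1, 1), (4, 28, 18, -1, 1)],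
    [(5, 0, 5, -1, 1), (5, 1, 5, 1, 1), (5, 2, 8, 3, 2), (5, 3, 6, 1, 2), (5, 4, 0, -1, 2), (5, 4, 1, 1, 2), (5, 6, 13, 3, 2), (5, 7, 2, -1, 2), (5, 10, 3, -1, 1), (5, 11, 7, -1, 1), (5, 17, 27, 1, 1), (5, 18, 28, 1, 1), (5, 21, 17, 1, 2), (5, 22, 18, 1, 2), (5, 25, 23, 1, 2), (5, 26, 24, 1, 2), (5, 29, 19, -1, 2), (5, 30, 20, -1, 2)],
    [(6, 1, 6, 1, 1), (6, 2, 5, 4, 1), (6, 3, 12, -3, 2), (6, 4, 3, 4, 1), (6, 5, 13, -3, 2), (6, 7, 0, -1, 2), (6, 7, 1, -1, 1), (6, 9, 2, 1, 1), (6, 11, 4, -1, 1), (6, 17, 23, 2, 1), (6, 18, 24, 2, 1), (6, 19, 27, 1, 1), (6, 20, 28, 1, 1), (6, 21, 25, -1, 1), (6, 22, 26, -1, 1), (6, 29, 17, 1, 1), (6, 30, 18, 1, 1)],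
    [(7, 1, 7, -1, 1), (7, 2, 9, 3, 2), (7, 3, 4, 1, 2), (7, 4, 11, -3, 2), (7, 5, 2, 1, 2), (7, 6, 0, 1, 2), (7, 6, 1, 1, 1), (7, 12, 3, -1, 1), (7, 13, 5, -1, 1), (7, 17, 29, 1, 1), (7, 18, 30, 1, 1), (7, 23, 17, 1, 2), (7, 24, 18, 1, 2), (7, 25, 21, -1, 2), (7, 26, 22, -1, 2), (7, 27, 19, 1, 2), (7, 28, 20, 1, 2)],
    [(8, 0, 8, -2, 1), (8, 1, 8, 1, 1), (8, 3, 5, 1, 1), (8, 4, 2, 1, 1), (8, 10, 0, 1, 1), (8, 11, 9, -1, 1), (8, 12, 13, 1, 1), (8, 21, 19, -1, 1), (8, 22, 20, -1, 1), (8, 25, 27, 1, 1), (8, 26, 28, 1, 1)],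
    [(9, 0, 9, -1, 1), (9, 1, 9, -1, 1), (9, 3, 7, 1, 1), (9, 6, 2, -1, 1), (9, 10, 11, 1, 1), (9, 12, 0, 1, 1), (9, 12, 1, 1, 1), (9, 13, 8, -1, 1), (9, 23, 19, -1, 1), (9, 24, 20, -1, 1), (9, 25, 29, 1, 1), (9, 26, 30, 1, 1)],
    [(10, 0, 10, 2, 1), (10, 1, 10, -1, 1), (10, 2, 4, 1, 1), (10, 5, 3, 1, 1), (10, 8, 0, -1, 1), (10, 9, 11, -1, 1), (10, 13, 12, 1, 1), (10, 19, 21, -1, 1), (10, 20, 22, -1, 1), (10, 27, 25, 1, 1), (10, 28, 26, 1, 1)],
    [(11, 0, 11, 1, 1), (11, 1, 11, -2, 1), (11, 5, 7, 1, 1), (11, 6, 4, 1, 1), (11, 8, 9, 1, 1), (11, 12, 10, -1, 1), (11, 13, 1, 1, 1), (11, 23, 21, -1, 1), (11, 24, 22, -1, 1), (11, 27, 29, 1, 1), (11, 28, 30, 1, 1)],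
    [(12, 0, 12, 1, 1), (12, 1, 12, 1, 1), (12, 2, 6, -1, 1), (12, 7, 3, 1, 1), (12, 8, 13, -1, 1), (12, 9, 0, -1, 1), (12, 9, 1, -1, 1), (12, 11, 10, 1, 1), (12, 19, 23, -1, 1), (12, 20, 24, -1, 1), (12, 29, 25, 1, 1), (12, 30, 26, 1, 1)],
    [(13, 0, 13, -1, 1), (13, 1, 13, 2, 1), (13, 4, 6, 1, 1), (13, 7, 5, 1, 1), (13, 9, 8, 1, 1), (13, 10, 12, -1, 1), (13, 11, 1, -1, 1), (13, 21, 23, -1, 1), (13, 22, 24, -1, 1), (13, 29, 27, 1, 1), (13, 30, 28, 1, 1)],
    [(14, 15, 15, 2, 1), (14, 16, 16, -2, 1), (14, 17, 17, 1, 1), (14, 18, 18, -1, 1), (14, 19, 19, 1, 1), (14, 20, 20, -1, 1), (14, 21, 21, 1, 1), (14, 22, 22, -1, 1), (14, 23, 23, 1, 1), (14, 24, 24, -1, 1), (14, 25, 25, 1, 1), (14, 26, 26, -1, 1), (14, 27, 27, 1, 1), (14, 28, 28, -1, 1), (14, 29, 29, 1, 1), (14, 30, 30, -1, 1)],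
    [(15, 14, 15, -2, 1), (15, 16, 14, 1, 1), (15, 18, 17, 1, 1), (15, 20, 19, 1, 1), (15, 22, 21, 1, 1), (15, 24, 23, 1, 1), (15, 26, 25, 1, 1), (15, 28, 27, 1, 1), (15, 30, 29, 1, 1)],
    [(16, 14, 16, 2, 1), (16, 15, 14, -1, 1), (16, 17, 18, 1, 1), (16, 19, 20, 1, 1), (16, 21, 22, 1, 1), (16, 23, 24, 1, 1), (16, 25, 26, 1, 1), (16, 27, 28, 1, 1), (16, 29, 30, 1, 1)],
    [(17, 2, 19, -2, 1), (17, 3, 25, -1, 1), (17, 4, 21, 2, 1), (17, 5, 27, -1, 1), (17, 6, 23, -2, 1), (17, 7, 29, -1, 1), (17, 14, 17, -1, 1), (17, 16, 18, -1, 1), (17, 17, 15, -8, 3), (17, 18, 14, 4, 3), (17, 20, 2, 2, 3), (17, 22, 4, -2, 3), (17, 24, 6, 2, 3), (17, 26, 3, 4, 3), (17, 28, 5, 4, 3), (17, 30, 7, 4, 3)],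
    [(18, 2, 20, -2, 1), (18, 3, 26, -1, 1), (18, 4, 22, 2, 1), (18, 5, 28, -1, 1), (18, 6, 24, -2, 1), (18, 7, 30, -1, 1), (18, 14, 18, 1, 1), (18, 15, 17, -1, 1), (18, 17, 14, 4, 3), (18, 18, 16, 8, 3), (18, 19, 2, -2, 3), (18, 21, 4, 2, 3), (18, 23, 6, -2, 3), (18, 25, 3, -4, 3), (18, 27, 5, -4, 3), (18, 29, 7, -4, 3)],
    [(19, 0, 19, -1, 1), (19, 3, 17, -1, 2), (19, 4, 29, -1, 1), (19, 6, 27, -1, 1), (19, 10, 21, 1, 1), (19, 12, 23, 1, 1), (19, 14, 19, -1, 1), (19, 16, 20, -1, 1), (19, 18, 2, -2, 3), (19, 22, 7, 2, 3), (19, 24, 5, -2, 3), (19, 25, 15, 4, 3), (19, 26, 0, 2, 3), (19, 26, 1, 1, 3), (19, 26, 14, -2, 3), (19, 28, 8, -1, 1), (19, 30, 9, -1, 1)],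
    [(20, 0, 20, -1, 1), (20, 3, 18, -1, 2), (20, 4, 30, -1, 1), (20, 6, 28, -1, 1), (20, 10, 22, 1, 1), (20, 12, 24, 1, 1), (20, 14, 20, 1, 1), (20, 15, 19, -1, 1), (20, 17, 2, 2, 3), (20, 21, 7, -2, 3), (20, 23, 5, 2, 3), (20, 25, 0, -2, 3), (20, 25, 1, -1, 3), (20, 25, 14, -2, 3), (20, 26, 16, -4, 3), (20, 27, 8, 1, 1), (20, 29, 9, 1, 1)],
    [(21, 0, 21, 1, 1), (21, 1, 21, -1, 1), (21, 2, 29, -1, 1), (21, 5, 17, -1, 2), (21, 6, 25, 1, 1), (21, 8, 19, 1, 1), (21, 13, 23, 1, 1), (21, 14, 21, -1, 1), (21, 16, 22, -1, 1), (21, 18, 4, 2, 3), (21, 20, 7, -2, 3), (21, 24, 3, 2, 3), (21, 26, 10, -1, 1), (21, 27, 15, 4, 3), (21, 28, 0, -1, 3), (21, 28, 1, 1, 3), (21, 28, 14, -2, 3), (21, 30, 11, -1, 1)],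
    [(22, 0, 22, 1, 1), (22, 1, 22, -1, 1), (22, 2, 30, -1, 1), (22, 5, 18, -1, 2), (22, 6, 26, 1, 1), (22, 8, 20, 1, 1), (22, 13, 24, 1, 1), (22, 14, 22, 1, 1), (22, 15, 21, -1, 1), (22, 17, 4, -2, 3), (22, 19, 7, 2, 3), (22, 23, 3, -2, 3), (22, 25, 10, 1, 1), (22, 27, 0, 1, 3), (22, 27, 1, -1, 3), (22, 27, 14, -2, 3), (22, 28, 16, -4, 3), (22, 29, 11, 1, 1)],
    [(23, 1, 23, 1, 1), (23, 2, 27, 1, 1), (23, 4, 25, 1, 1), (23, 7, 17, -1, 2), (23, 9, 19, 1, 1), (23, 11, 21, 1, 1), (23, 14, 23, -1, 1), (23, 16, 24, -1, 1), (23, 18, 6, -2, 3), (23, 20, 5, 2, 3), (23, 22, 3, -2, 3), (23, 26, 12, -1, 1), (23, 28, 13, -1, 1), (23, 29, 15, 4, 3), (23, 30, 0, -1, 3), (23, 30, 1, -2, 3), (23, 30, 14, -2, 3)],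
    [(24, 1, 24, 1, 1), (24, 2, 28, 1, 1), (24, 4, 26, 1, 1), (24, 7, 18, -1, 2), (24, 9, 20, 1, 1), (24, 11, 22, 1, 1), (24, 14, 24, 1, 1), (24, 15, 23, -1, 1), (24, 17, 6, 2, 3), (24, 19, 5, -2, 3), (24, 21, 3, 2, 3), (24, 25, 12, 1, 1), (24, 27, 13, 1, 1), (24, 29, 0, 1, 3), (24, 29, 1, 2, 3), (24, 29, 14, -2, 3), (24, 30, 16, -4, 3)],
    [(25, 0, 25, 1, 1), (25, 2, 17, -1, 1), (25, 5, 23, -1, 2), (25, 7, 21, 1, 2), (25, 8, 27, -1, 1), (25, 9, 29, -1, 1), (25, 14, 25, -1, 1), (25, 16, 26, -1, 1), (25, 18, 3, -4, 3), (25, 19, 15, 4, 3), (25, 20, 0, -2, 3), (25, 20, 1, -1, 3), (25, 20, 14, -2, 3), (25, 22, 10, 1, 1), (25, 24, 12, 1, 1), (25, 28, 6, -1, 3), (25, 30, 4, -1, 3)],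
    [(26, 0, 26, 1, 1), (26, 2, 18, -1, 1), (26, 5, 24, -1, 2), (26, 7, 22, 1, 2), (26, 8, 28, -1, 1), (26, 9, 30, -1, 1), (26, 14, 26, 1, 1), (26, 15, 25, -1, 1), (26, 17, 3, 4, 3), (26, 19, 0, 2, 3), (26, 19, 1, 1, 3), (26, 19, 14, -2, 3), (26, 20, 16, -4, 3), (26, 21, 10, -1, 1), (26, 23, 12, -1, 1), (26, 27, 6, 1, 3), (26, 29, 4, 1, 3)],
    [(27, 0, 27, -1, 1), (27, 1, 27, 1, 1), (27, 3, 23, 1, 2), (27, 4, 17, 1, 1), (27, 7, 19, -1, 2), (27, 10, 25, -1, 1), (27, 11, 29, -1, 1), (27, 14, 27, -1, 1), (27, 16, 28, -1, 1), (27, 18, 5, -4, 3), (27, 20, 8, 1, 1), (27, 21, 15, 4, 3), (27, 22, 0, 1, 3), (27, 22, 1, -1, 3), (27, 22, 14, -2, 3), (27, 24, 13, 1, 1), (27, 26, 6, 1, 3), (27, 30, 2, -1, 3)],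
    [(28, 0, 28, -1, 1), (28, 1, 28, 1, 1), (28, 3, 24, 1, 2), (28, 4, 18, 1, 1), (28, 7, 20, -1, 2), (28, 10, 26, -1, 1), (28, 11, 30, -1, 1), (28, 14, 28, 1, 1), (28, 15, 27, -1, 1), (28, 17, 5, 4, 3), (28, 19, 8, -1, 1), (28, 21, 0, -1, 3), (28, 21, 1, 1, 3), (28, 21, 14, -2, 3), (28, 22, 16, -4, 3), (28, 23, 13, -1, 1), (28, 25, 6, -1, 3), (28, 29, 2, 1, 3)],
    [(29, 1, 29, -1, 1), (29, 3, 21, -1, 2), (29, 5, 19, 1, 2), (29, 6, 17, -1, 1), (29, 12, 25, -1, 1), (29, 13, 27, -1, 1), (29, 14, 29, -1, 1), (29, 16, 30, -1, 1), (29, 18, 7, -4, 3), (29, 20, 9, 1, 1), (29, 22, 11, 1, 1), (29, 23, 15, 4, 3), (29, 24, 0, 1, 3), (29, 24, 1, 2, 3), (29, 24, 14, -2, 3), (29, 26, 4, 1, 3), (29, 28, 2, 1, 3)],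
    [(30, 1, 30, -1, 1), (30, 3, 22, -1, 2), (30, 5, 20, 1, 2), (30, 6, 18, -1, 1), (30, 12, 26, -1, 1), (30, 13, 28, -1, 1), (30, 14, 30, 1, 1), (30, 15, 29, -1, 1), (30, 17, 7, 4, 3), (30, 19, 9, -1, 1), (30, 21, 11, -1, 1), (30, 23, 0, -1, 3), (30, 23, 1, -2, 3), (30, 23, 14, -2, 3), (30, 24, 16, -4, 3), (30, 25, 4, -1, 3), (30, 27, 2, -1, 3)]]"

definition g3_row :: "nat \<Rightarrow> (nat \<times> nat \<times> nat \<times> int \<times> int) list" where
  "g3_row i = filter (\<lambda>e. fst e = i) g3_table"

lemma all_less_31_iff:
  "(\<forall>i<(31::nat). P i) \<longleftrightarrow>
    (P 0 \<and> P 1 \<and> P 2 \<and> P 3 \<and> P 4 \<and> P 5 \<and> P 6 \<and> P 7 \<and> P 8 \<and> P 9 \<and> P 10 \<and>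
     P 11 \<and> P 12 \<and> P 13 \<and> P 14 \<and> P 15 \<and> P 16 \<and> P 17 \<and> P 18 \<and> P 19 \<and> P 20 \<and> P 21 \<and>
     P 22 \<and> P 23 \<and> P 24 \<and> P 25 \<and> P 26 \<and> P 27 \<and> P 28 \<and> P 29 \<and> P 30)"
proof -
  have lessThan_1: "{..<1::nat} = {0}" by auto
  have "(\<forall>i<(31::nat). P i) \<longleftrightarrow> (\<forall>i\<in>{..<31::nat}. P i)" by auto
  also have "\<dots> \<longleftrightarrow>
    (P 0 \<and> P 1 \<and> P 2 \<and> P 3 \<and> P 4 \<and> P 5 \<and> P 6 \<and> P 7 \<and> P 8 \<and> P 9 \<and> P 10 \<and>
     P 11 \<and> P 12 \<and> P 13 \<and> P 14 \<and> P 15 \<and> P 16 \<and> P 17 \<and> P 18 \<and> P 19 \<and> P 20 \<and> P 21 \<and>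
     P 22 \<and> P 23 \<and> P 24 \<and> P 25 \<and> P 26 \<and> P 27 \<and> P 28 \<and> P 29 \<and> P 30)"
    by (simp only: lessThan_nat_numeral pred_numeral_simps ball_simps Num.BitM.simps lessThan_1 numeral_One simp_thms conj_assoc) (simp only: conj_ac)
  finally show ?thesis .
qed

lemma g3_table_eq_concat_rows: "g3_table = concat g3_rows"
  by (simp add: g3_table_def g3_rows_def)

lemma length_g3_rows: "length g3_rows = 31"
  by (simp add: g3_rows_def)

lemma g3_rows_indexed: "\<forall>m<length g3_rows. \<forall>e\<in>set (g3_rows ! m). fst e = m"
  unfolding length_g3_rows by (simp only: all_less_31_iff) (simp add: g3_rows_def)

lemma filter_concat_indexed:
  assumes "\<forall>m<length xss. \<forall>x\<in>set (xss ! m). f x = k + m" and "n < length xss"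
  shows "filter (\<lambda>x. f x = k + n) (concat xss) = xss ! n"
  using assms
proof (induction xss arbitrary: k n)
  case Nil
  then show ?case by simp
next
  case (Cons xs xss)
  have head: "\<forall>x\<in>set xs. f x = k" and tail: "\<forall>m<length xss. \<forall>x\<in>set (xss ! m). f x = Suc k + m"
    using Cons.prems(1) by (force, auto)
  show ?case
  proof (cases n)
    case 0
    have "f x \<noteq> k" if x: "x \<in> set (concat xss)" for x
    proof -
      obtain ys where "ys \<in> set xss" "x \<in> set ys" using x by auto
      then obtain m where "m < length xss" "x \<in> set (xss ! m)" by (auto simp: in_set_conv_nth)
      then have "f x = Suc k + m" using tail by blast
      then show ?thesis by simp
    qed
    then have "filter (\<lambda>x. f x = k) (concat xss) = []"
      by (simp add: filter_empty_conv)
    then show ?thesis using head 0 by simp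
  next
    case (Suc n')
    have "filter (\<lambda>x. f x = Suc k + n') (concat xss) = xss ! n'"
      using Cons.IH[OF tail] Cons.prems(2) Suc by simp
    then show ?thesis using head Suc by simp
  qed
qed

lemma g3_row_eq_nth:
  assumes "n < 31"
  shows "g3_row n = g3_rows ! n"
  unfolding g3_row_def g3_table_eq_concat_rows
  using filter_concat_indexed[where k = 0, unfolded add_0, OF g3_rows_indexed] assms
  by (simp only: length_g3_rows)

definition g3_deg :: "nat \<Rightarrow> int" where
  "g3_deg n = [0, 0, 1, -1, 2, -2, -3, 3, -1, 4, 1, 5, -4, -5, 0, 0, 0, 0, 0, 1, 1, 2, 2, -3, -3, -1, -1, -2, -2, 3, 3] ! n"

lemmas g3_deg_eval [simp] =
  g3_deg_def[of 0, simplified] g3_deg_def[of 1, simplified] g3_deg_def[of 2, simplified] g3_deg_def[of 3, simplified]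
  g3_deg_def[of 4, simplified] g3_deg_def[of 5, simplified] g3_deg_def[of 6, simplified] g3_deg_def[of 7, simplified]
  g3_deg_def[of 8, simplified] g3_deg_def[of 9, simplified] g3_deg_def[of 10, simplified] g3_deg_def[of 11, simplified]
  g3_deg_def[of 12, simplified] g3_deg_def[of 13, simplified] g3_deg_def[of 14, simplified] g3_deg_def[of 15, simplified]
  g3_deg_def[of 16, simplified] g3_deg_def[of 17, simplified] g3_deg_def[of 18, simplified] g3_deg_def[of 19, simplified]
  g3_deg_def[of 20, simplified] g3_deg_def[of 21, simplified] g3_deg_def[of 22, simplified] g3_deg_def[of 23, simplified]
  g3_deg_def[of 24, simplified] g3_deg_def[of 25, simplified] g3_deg_def[of 26, simplified] g3_deg_def[of 27, simplified]
  g3_deg_def[of 28, simplified] g3_deg_def[of 29, simplified] g3_deg_def[of 30, simplified]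

lemmas g3_par_eval [simp] = g3_par_def[of 0] g3_par_def[of "Suc 0"] g3_par_def[of "numeral k" for k]

(* Only the rows of the grading element (0, 1) and of the basis of m are ever evaluated. *)
lemmas g3_row_eval =
  g3_row_eq_nth[of 0, unfolded g3_rows_def, simplified] g3_row_eq_nth[of 1, unfolded g3_rows_def, simplified]
  g3_row_eq_nth[of 3, unfolded g3_rows_def, simplified] g3_row_eq_nth[of 5, unfolded g3_rows_def, simplified]
  g3_row_eq_nth[of 6, unfolded g3_rows_def, simplified] g3_row_eq_nth[of 8, unfolded g3_rows_def, simplified]
  g3_row_eq_nth[of 12, unfolded g3_rows_def, simplified] g3_row_eq_nth[of 13, unfolded g3_rows_def, simplified]
  g3_row_eq_nth[of 23, unfolded g3_rows_def, simplified] g3_row_eq_nth[of 24, unfolded g3_rows_def, simplified]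
  g3_row_eq_nth[of 25, unfolded g3_rows_def, simplified] g3_row_eq_nth[of 26, unfolded g3_rows_def, simplified]
  g3_row_eq_nth[of 27, unfolded g3_rows_def, simplified] g3_row_eq_nth[of 28, unfolded g3_rows_def, simplified]

definition g3_m_index :: "nat set" where
  "g3_m_index = {i. i < 31 \<and> g3_deg i < 0}"

lemma g3_m_index_eq: "g3_m_index = {3, 5, 6, 8, 12, 13, 23, 24, 25, 26, 27, 28}"
proof -
  have "\<forall>i<31. g3_deg i < 0 \<longrightarrow> i \<in> {3, 5, 6, 8, 12, 13, 23, 24, 25, 26, 27, 28}"
    by (simp only: all_less_31_iff) simp
  then show ?thesis by (auto simp: g3_m_index_def)
qed

lemma g3_sc_row:
  "g3_sc i j k = sum_list (map (\<lambda>(a,b,c,p,q).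
     if a = i \<and> b = j \<and> c = k then of_int p / of_int q else 0) (g3_row i))"
  unfolding g3_sc_def g3_row_def by (rule sum_list_map_filter[symmetric]) auto

lemma g3_table_graded: "list_all (\<lambda>(a,b,c,p,q). g3_deg c = g3_deg a + g3_deg b) g3_table"
  unfolding g3_table_def by simp

lemma g3_row_graded: "(a,b,c,p,q) \<in> set (g3_row i) \<Longrightarrow> g3_deg c = g3_deg a + g3_deg b"
  using g3_table_graded by (auto simp: g3_row_def list_all_iff)

lemma sum_list_map_eq_0: "(\<And>x. x \<in> set xs \<Longrightarrow> f x = 0) \<Longrightarrow> sum_list (map f xs) = 0"
  by (induction xs) auto

(* ad_coeff i k y is the e_k-coordinate of [e_i, y], and br_pair i j y = sum_l c_ij^l y_l.  They
   are stated over any field so that the cocycle equations can also be read over the reals. *)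
definition ad_coeff :: "nat \<Rightarrow> nat \<Rightarrow> (nat \<Rightarrow> 'a::field) \<Rightarrow> 'a" where
  "ad_coeff i k y = sum_list (map (\<lambda>(a,b,c,p,q).
     if a = i \<and> c = k \<and> b < 31 then y b * (of_int p / of_int q) else 0) (g3_row i))"

definition br_pair :: "nat \<Rightarrow> nat \<Rightarrow> (nat \<Rightarrow> 'a::field) \<Rightarrow> 'a" where
  "br_pair i j y = sum_list (map (\<lambda>(a,b,c,p,q).
     if a = i \<and> b = j \<and> c < 31 then y c * (of_int p / of_int q) else 0) (g3_row i))"

lemma sum_mult_g3_sc_left: "(\<Sum>l<31. y l * g3_sc i l k) = ad_coeff i k y"
proof -
  have "(\<Sum>l<31. y l * (if a = i \<and> b = l \<and> c = k then r else 0))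
      = (if a = i \<and> c = k \<and> b < 31 then y b * r else 0)" for a b c and r :: complex
    by (cases "a = i \<and> c = k") (auto simp: if_distrib[of "\<lambda>x. y _ * x"] cong: if_cong)
  then have "(\<Sum>l<31. y l * sum_list (map (\<lambda>(a,b,c,p,q). if a = i \<and> b = l \<and> c = k then of_int p / of_int q else 0) T))
      = sum_list (map (\<lambda>(a,b,c,p,q). if a = i \<and> c = k \<and> b < 31 then y b * (of_int p / of_int q) else 0) T)" for T
    by (induction T) (auto simp: distrib_left sum.distrib)
  then show ?thesis by (simp add: g3_sc_row ad_coeff_def)
qed

lemma sum_mult_g3_sc_right: "(\<Sum>l<31. y l * g3_sc i j l) = br_pair i j y"
proof -
  have "(\<Sum>l<31. y l * (if a = i \<and> b = j \<and> c = l then r else 0))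
      = (if a = i \<and> b = j \<and> c < 31 then y c * r else 0)" for a b c and r :: complex
    by (cases "a = i \<and> b = j") (auto simp: if_distrib[of "\<lambda>x. y _ * x"] cong: if_cong)
  then have "(\<Sum>l<31. y l * sum_list (map (\<lambda>(a,b,c,p,q). if a = i \<and> b = j \<and> c = l then of_int p / of_int q else 0) T))
      = sum_list (map (\<lambda>(a,b,c,p,q). if a = i \<and> b = j \<and> c < 31 then y c * (of_int p / of_int q) else 0) T)" for T
    by (induction T) (auto simp: distrib_left sum.distrib)
  then show ?thesis by (simp add: g3_sc_row br_pair_def)
qed

lemma g3_sc_eq_0_if_deg_ne:
  assumes "g3_deg l \<noteq> g3_deg i + g3_deg j"
  shows "g3_sc i j l = 0"
  unfolding g3_sc_row
  by (rule sum_list_map_eq_0) (use assms g3_row_graded in fastforce)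

lemma ad_coeff_eq_0:
  assumes "\<And>b. g3_deg b = g3_deg k - g3_deg i \<Longrightarrow> y b = 0"
  shows "ad_coeff i k y = 0"
  unfolding ad_coeff_def
  by (rule sum_list_map_eq_0) (use assms g3_row_graded in fastforce)

lemma g3_br_coord: "n < 31 \<Longrightarrow> g3_br x y n = (\<Sum>i<31. x i * ad_coeff i n y)"
  unfolding g3_br_def by (simp add: sum_mult_g3_sc_left[symmetric] sum_distrib_left mult.assoc)

lemma g3_br_eq_0_outside: "\<not> n < 31 \<Longrightarrow> g3_br x y n = 0"
  by (simp add: g3_br_def)

definition g3_basis :: "nat \<Rightarrow> g3vec" where
  "g3_basis i = (\<lambda>n. if n = i then 1 else 0)"

lemma g3_br_basis_left: "i < 31 \<Longrightarrow> n < 31 \<Longrightarrow> g3_br (g3_basis i) y n = ad_coeff i n y"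
  by (simp add: g3_br_coord g3_basis_def if_distrib[of "\<lambda>x. x * _"] cong: if_cong)

lemma g3_br_basis:
  assumes "i < 31" "j < 31"
  shows "g3_br (g3_basis i) (g3_basis j) n = (if n < 31 then g3_sc i j n else 0)"
proof (cases "n < 31")
  case True
  have "ad_coeff i n (g3_basis j) = g3_sc i j n"
    using assms(2) by (simp flip: sum_mult_g3_sc_left add: g3_basis_def if_distrib[of "\<lambda>x. x * _"] cong: if_cong)
  then show ?thesis using g3_br_basis_left[OF assms(1) True] True by simp
qed (simp add: g3_br_eq_0_outside)

lemma ad_Z_coeff: "\<forall>n<31. ad_coeff 0 n x + 3 * ad_coeff 1 n x = of_int (g3_deg n) * (x n :: complex)"
  by (simp only: all_less_31_iff) (simp add: ad_coeff_def g3_row_eval)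

lemma g3_br_Z: "n < 31 \<Longrightarrow> g3_br g3_Z x n = of_int (g3_deg n) * x n"
proof -
  assume n: "n < 31"
  have "(\<Sum>i<31. g3_Z i * ad_coeff i n x)
      = (\<Sum>i<(31::nat). (if i = 0 then ad_coeff 0 n x else 0) + (if i = 1 then 3 * ad_coeff 1 n x else 0))"
    by (intro sum.cong) (auto simp: g3_Z_def)
  also have "\<dots> = ad_coeff 0 n x + 3 * ad_coeff 1 n x"
    by (simp add: sum.distrib)
  finally show ?thesis using ad_Z_coeff n by (simp add: g3_br_coord)
qed

lemma g3_grade_iff: "x \<in> g3_grade k \<longleftrightarrow> x \<in> g3_space \<and> (\<forall>n<31. g3_deg n \<noteq> k \<longrightarrow> x n = 0)"
proof -
  have "g3_br g3_Z x n = of_int k * x n \<longleftrightarrow> n < 31 \<longrightarrow> g3_deg n \<noteq> k \<longrightarrow> x n = 0"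
    if "x \<in> g3_space" for n
    using that by (cases "n < 31") (auto simp: g3_br_Z g3_br_eq_0_outside g3_space_def)
  then show ?thesis by (auto simp: g3_grade_def fun_eq_iff)
qed

lemma g3_m_iff: "x \<in> g3_m \<longleftrightarrow> x \<in> g3_space \<and> (\<forall>n<31. 0 \<le> g3_deg n \<longrightarrow> x n = 0)"
proof
  assume "x \<in> g3_m"
  then obtain S f where S: "finite S" "S \<subseteq> {k. k < 0}" "\<forall>k\<in>S. f k \<in> g3_grade k"
    and x: "x = (\<lambda>i. \<Sum>k\<in>S. f k i)"
    unfolding g3_m_def by blast
  have "f k n = 0" if k: "k \<in> S" and n: "31 \<le> n \<or> 0 \<le> g3_deg n" for k n
  proof -
    have "f k \<in> g3_grade k" "k < 0" using S k by auto
    then show ?thesis using n by (cases "n < 31") (auto simp: g3_grade_iff g3_space_def)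
  qed
  then show "x \<in> g3_space \<and> (\<forall>n<31. 0 \<le> g3_deg n \<longrightarrow> x n = 0)"
    by (simp add: x g3_space_def)
next
  assume x: "x \<in> g3_space \<and> (\<forall>n<31. 0 \<le> g3_deg n \<longrightarrow> x n = 0)"
  define f where "f k n = (if n < 31 \<and> g3_deg n = k then x n else 0)" for k n
  have "f k \<in> g3_grade k" for k
    by (simp add: g3_grade_iff g3_space_def f_def)
  moreover have "x = (\<lambda>n. \<Sum>k\<in>{-5..<0}. f k n)"
  proof
    fix n
    show "x n = (\<Sum>k\<in>{-5..<0}. f k n)"
    proof (cases "n < 31 \<and> g3_deg n < 0")
      case True
      have "\<forall>n<31. -5 \<le> g3_deg n" by (simp only: all_less_31_iff) simp
      then have "g3_deg n \<in> {-5..<0}" using True by simp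
      then show ?thesis using True by (simp add: f_def)
    next
      case False
      then have "x n = 0" using x by (cases "n < 31") (auto simp: g3_space_def)
      moreover have "f k n = 0" for k using False x by (auto simp: f_def)
      ultimately show ?thesis by simp
    qed
  qed
  ultimately show "x \<in> g3_m"
    unfolding g3_m_def by (intro CollectI exI[of _ "{-5..<0}"] exI[of _ f]) auto
qed

lemma g3_basis_grade: "i < 31 \<Longrightarrow> g3_basis i \<in> g3_grade (g3_deg i)"
  by (simp add: g3_grade_iff g3_space_def g3_basis_def)

lemma g3_basis_m: "i \<in> g3_m_index \<Longrightarrow> g3_basis i \<in> g3_m"
  by (auto simp: g3_m_iff g3_space_def g3_basis_def g3_m_index_def)

lemma g3_basis_hom: "i < 31 \<Longrightarrow> g3_basis i \<in> g3_hom (g3_par i)"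
  by (simp add: g3_hom_def g3_space_def g3_basis_def)

lemma g3_lincomb_basis_m:
  assumes "A \<subseteq> g3_m_index"
  shows "(\<lambda>n. \<Sum>i\<in>A. c i * g3_basis i n) \<in> g3_m"
proof -
  have "(\<Sum>i\<in>A. c i * g3_basis i n) = 0" if "31 \<le> n \<or> 0 \<le> g3_deg n" for n
    using assms that by (intro sum.neutral) (auto simp: g3_basis_def g3_m_index_def)
  then show ?thesis by (simp add: g3_m_iff g3_space_def)
qed

lemma g3_m_expand:
  assumes "x \<in> g3_m"
  shows "x = (\<lambda>n. \<Sum>i\<in>g3_m_index. x i * g3_basis i n)"
proof
  fix n
  have "x n = 0" if "n \<notin> g3_m_index"
    using assms that by (cases "n < 31") (auto simp: g3_m_iff g3_space_def g3_m_index_def)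
  then show "x n = (\<Sum>i\<in>g3_m_index. x i * g3_basis i n)"
    by (cases "n \<in> g3_m_index") (simp_all add: g3_basis_def g3_m_index_eq)
qed

lemma g3_C1_lincomb_basis:
  assumes "\<phi> \<in> g3_C1 d" and "A \<subseteq> g3_m_index"
  shows "\<phi> (\<lambda>n. \<Sum>i\<in>A. c i * g3_basis i n) = (\<lambda>n. \<Sum>i\<in>A. c i * \<phi> (g3_basis i) n)"
proof -
  have add: "\<phi> (\<lambda>n. x n + y n) = (\<lambda>n. \<phi> x n + \<phi> y n)" if "x \<in> g3_m" "y \<in> g3_m" for x y
    using assms(1) that by (auto simp: g3_C1_def)
  have scale: "\<phi> (\<lambda>n. c * x n) = (\<lambda>n. c * \<phi> x n)" if "x \<in> g3_m" for c x
    using assms(1) that by (auto simp: g3_C1_def)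
  have "finite A" using assms(2) by (simp add: g3_m_index_eq finite_subset)
  then show ?thesis using assms(2)
  proof (induction A rule: finite_induct)
    case empty
    have "(\<lambda>_. 0) \<in> g3_m" by (simp add: g3_m_iff g3_space_def)
    from scale[OF this, of 0] show ?case by simp
  next
    case (insert a A)
    then have a: "g3_basis a \<in> g3_m" and A: "(\<lambda>n. \<Sum>i\<in>A. c i * g3_basis i n) \<in> g3_m"
      by (auto intro: g3_basis_m g3_lincomb_basis_m)
    have "\<phi> (\<lambda>n. \<Sum>i\<in>insert a A. c i * g3_basis i n)
        = \<phi> (\<lambda>n. c a * g3_basis a n + (\<Sum>i\<in>A. c i * g3_basis i n))"
      using insert.hyps by simp
    moreover have "(\<lambda>n. c a * g3_basis a n) \<in> g3_m"
      using a by (simp add: g3_m_iff g3_space_def)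
    ultimately have "\<phi> (\<lambda>n. \<Sum>i\<in>insert a A. c i * g3_basis i n)
        = (\<lambda>n. c a * \<phi> (g3_basis a) n + \<phi> (\<lambda>n. \<Sum>i\<in>A. c i * g3_basis i n) n)"
      using add[OF _ A] scale[OF a] by simp
    then show ?case using insert by simp
  qed
qed

lemma g3_C1_expand:
  assumes "\<phi> \<in> g3_C1 d" and "x \<in> g3_m"
  shows "\<phi> x = (\<lambda>n. \<Sum>i\<in>g3_m_index. x i * \<phi> (g3_basis i) n)"
  using g3_m_expand[OF assms(2)] g3_C1_lincomb_basis[OF assms(1) order_refl] by metis

lemma g3_br_basis_m:
  assumes "i \<in> g3_m_index" "j \<in> g3_m_index"
  shows "g3_br (g3_basis i) (g3_basis j) \<in> g3_m"
proof -
  have "g3_br (g3_basis i) (g3_basis j) n = 0" if "31 \<le> n \<or> 0 \<le> g3_deg n" for n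
    using assms that g3_sc_eq_0_if_deg_ne[of n i j]
    by (auto simp: g3_br_basis g3_m_index_def)
  then show ?thesis by (simp add: g3_m_iff g3_space_def)
qed

definition d1_coeff :: "(nat \<Rightarrow> nat \<Rightarrow> 'a::field) \<Rightarrow> nat \<Rightarrow> nat \<Rightarrow> nat \<Rightarrow> 'a" where
  "d1_coeff F i j k =
     (\<Sum>p\<in>{0,1::nat}.
        (-1) ^ (g3_par i * p) * ad_coeff i k (\<lambda>l. if l < 31 \<and> g3_par l = (g3_par j + p) mod 2 then F j l else 0)
      - (-1) ^ (g3_par j * (g3_par i + p)) * ad_coeff j k (\<lambda>l. if l < 31 \<and> g3_par l = (g3_par i + p) mod 2 then F i l else 0))
     - br_pair i j (\<lambda>l. if g3_deg l < 0 then F l k else 0)"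

definition d0_coeff :: "(nat \<Rightarrow> 'a::field) \<Rightarrow> nat \<Rightarrow> nat \<Rightarrow> 'a" where
  "d0_coeff v i n = (\<Sum>p\<in>{0,1::nat}. (-1) ^ (g3_par i * p) * ad_coeff i n (\<lambda>l. if l < 31 \<and> g3_par l = p then v l else 0))"

lemma g3_Z1_d1_coeff:
  assumes "\<phi> \<in> g3_Z1 d" and i: "i \<in> g3_m_index" and j: "j \<in> g3_m_index" and k: "k < 31"
  shows "d1_coeff (\<lambda>a b. \<phi> (g3_basis a) b) i j k = 0"
proof -
  have C1: "\<phi> \<in> g3_C1 d" using assms(1) by (simp add: g3_Z1_def)
  have i31: "i < 31" and j31: "j < 31" using i j by (auto simp: g3_m_index_def)
  have "g3_basis i \<in> g3_m \<inter> g3_hom (g3_par i)" "g3_basis j \<in> g3_m \<inter> g3_hom (g3_par j)"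
    using i j i31 j31 by (simp_all add: g3_basis_m g3_basis_hom)
  moreover have "g3_par i \<in> {0, 1}" "g3_par j \<in> {0, 1}"
    by (simp_all add: g3_par_def)
  ultimately have "g3_d1 \<phi> (g3_par i) (g3_par j) (g3_basis i) (g3_basis j) k = 0"
    using assms(1) unfolding g3_Z1_def by fastforce
  moreover have "\<phi> (g3_br (g3_basis i) (g3_basis j)) k
      = br_pair i j (\<lambda>l. if g3_deg l < 0 then \<phi> (g3_basis l) k else 0)"
  proof -
    have "\<phi> (g3_br (g3_basis i) (g3_basis j)) k
        = (\<Sum>l\<in>g3_m_index. g3_sc i j l * \<phi> (g3_basis l) k)"
      using g3_C1_expand[OF C1 g3_br_basis_m[OF i j]] i31 j31
      by (simp add: g3_br_basis g3_m_index_def)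
    also have "\<dots> = (\<Sum>l<31. if g3_deg l < 0 then g3_sc i j l * \<phi> (g3_basis l) k else 0)"
    proof -
      have m: "g3_m_index = {..<31} \<inter> {l. g3_deg l < 0}" by (auto simp: g3_m_index_def)
      show ?thesis unfolding m sum.inter_restrict[OF finite_lessThan] by simp
    qed
    also have "\<dots> = (\<Sum>l<31. (if g3_deg l < 0 then \<phi> (g3_basis l) k else 0) * g3_sc i j l)"
      by (intro sum.cong) auto
    finally show ?thesis by (simp add: sum_mult_g3_sc_right)
  qed
  ultimately show ?thesis
    unfolding g3_d1_def d1_coeff_def g3_ppart_def
    by (simp only: g3_br_basis_left[OF i31 k] g3_br_basis_left[OF j31 k])
qed

lemma g3_d0_coeff:
  assumes "x \<in> g3_m" "x \<in> g3_hom a" and "n < 31"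
  shows "g3_d0 v a x n = (\<Sum>i\<in>g3_m_index. x i * d0_coeff v i n)"
proof -
  have hom: "x i = 0" if "g3_par i \<noteq> a" for i
    using assms(2) that by (simp add: g3_hom_def)
  have "g3_d0 v a x n = (\<Sum>i<31. x i * (\<Sum>p\<in>{0,1::nat}. (-1) ^ (a * p) * ad_coeff i n (g3_ppart p v)))"
    by (simp add: g3_d0_def g3_br_coord[OF assms(3)] sum_distrib_left sum.distrib algebra_simps)
  also have "\<dots> = (\<Sum>i\<in>g3_m_index. x i * d0_coeff v i n)"
  proof (rule sum.mono_neutral_cong_right)
    show "\<forall>i\<in>{..<31} - g3_m_index. x i * (\<Sum>p\<in>{0,1::nat}. (-1) ^ (a * p) * ad_coeff i n (g3_ppart p v)) = 0"
      using assms(1) by (auto simp: g3_m_iff g3_m_index_def)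
    show "x i * (\<Sum>p\<in>{0,1::nat}. (-1) ^ (a * p) * ad_coeff i n (g3_ppart p v)) = x i * d0_coeff v i n" for i
      using hom[of i] by (cases "g3_par i = a") (auto simp: d0_coeff_def g3_ppart_def)
  qed (auto simp: g3_m_index_def)
  finally show ?thesis .
qed

lemma d0_coeff_eq_0:
  assumes "\<And>l. g3_deg l \<noteq> d \<Longrightarrow> v l = 0" and "g3_deg n \<noteq> g3_deg i + d"
  shows "d0_coeff v i n = 0"
  using assms by (simp add: d0_coeff_def ad_coeff_eq_0)

lemma linear_complex_scale:
  fixes h :: "complex \<Rightarrow> real"
  assumes "linear h"
  shows "h (z * of_int p / of_int q) = h z * of_int p / of_int q"
    and "h ((-1) ^ n * z) = (-1) ^ n * h z"
proof -
  have "z * of_int p / of_int q = (of_int p / of_int q :: real) *\<^sub>R z"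
    and "(-1) ^ n * z = ((-1) ^ n :: real) *\<^sub>R z"
    by (simp_all add: scaleR_conv_of_real)
  then show "h (z * of_int p / of_int q) = h z * of_int p / of_int q"
    and "h ((-1) ^ n * z) = (-1) ^ n * h z"
    using linear_scale[OF assms] by simp_all
qed

lemma linear_sum_list_map: "linear h \<Longrightarrow> h (sum_list (map f xs)) = sum_list (map (\<lambda>x. h (f x)) xs)"
  by (induction xs) (simp_all add: linear_0 linear_add)

lemma linear_ad_coeff:
  fixes h :: "complex \<Rightarrow> real"
  assumes "linear h"
  shows "h (ad_coeff i k y) = ad_coeff i k (\<lambda>l. h (y l))"
  unfolding ad_coeff_def linear_sum_list_map[OF assms]
  by (intro arg_cong[where f = sum_list] map_cong)
     (auto simp: linear_0[OF assms] linear_complex_scale[OF assms])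

lemma linear_br_pair:
  fixes h :: "complex \<Rightarrow> real"
  assumes "linear h"
  shows "h (br_pair i j y) = br_pair i j (\<lambda>l. h (y l))"
  unfolding br_pair_def linear_sum_list_map[OF assms]
  by (intro arg_cong[where f = sum_list] map_cong)
     (auto simp: linear_0[OF assms] linear_complex_scale[OF assms])

lemma linear_d1_coeff:
  fixes h :: "complex \<Rightarrow> real"
  assumes "linear h"
  shows "h (d1_coeff F i j k) = d1_coeff (\<lambda>a b. h (F a b)) i j k"
  by (simp add: d1_coeff_def linear_0[OF assms] linear_diff[OF assms] linear_add[OF assms] linear_complex_scale[OF assms]
      linear_ad_coeff[OF assms] linear_br_pair[OF assms] if_distrib[of h] cong: if_cong)

lemma linear_d0_coeff:
  fixes h :: "complex \<Rightarrow> real"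
  assumes "linear h"
  shows "h (d0_coeff v i n) = d0_coeff (\<lambda>l. h (v l)) i n"
  by (simp add: d0_coeff_def linear_0[OF assms] linear_add[OF assms] linear_complex_scale[OF assms]
      linear_ad_coeff[OF assms] if_distrib[of h] cong: if_cong)

definition cocycle_coeffs :: "int \<Rightarrow> (nat \<Rightarrow> nat \<Rightarrow> 'a::field) \<Rightarrow> bool" where
  "cocycle_coeffs d F \<longleftrightarrow>
     (\<forall>i\<in>g3_m_index. \<forall>k<31. g3_deg k \<noteq> g3_deg i + d \<longrightarrow> F i k = 0) \<and>
     (\<forall>i\<in>g3_m_index. \<forall>j\<in>g3_m_index. \<forall>k<31. d1_coeff F i j k = 0)"

definition coboundary_coeffs :: "int \<Rightarrow> (nat \<Rightarrow> nat \<Rightarrow> 'a::field) \<Rightarrow> bool" where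
  "coboundary_coeffs d F \<longleftrightarrow> (\<exists>v. (\<forall>l. (31 \<le> l \<or> g3_deg l \<noteq> d) \<longrightarrow> v l = 0) \<and>
     (\<forall>i\<in>g3_m_index. \<forall>n<31. g3_deg n = g3_deg i + d \<longrightarrow> F i n = d0_coeff v i n))"

lemma cocycle_coeffs_vanish:
  "cocycle_coeffs d F \<Longrightarrow> i < 31 \<Longrightarrow> g3_deg i < 0 \<Longrightarrow> k < 31 \<Longrightarrow> g3_deg k \<noteq> g3_deg i + d \<Longrightarrow> F i k = 0"
  by (simp add: cocycle_coeffs_def g3_m_index_def)

lemma cocycle_coeffs_d1:
  "cocycle_coeffs d F \<Longrightarrow> i \<in> g3_m_index \<Longrightarrow> j \<in> g3_m_index \<Longrightarrow> k < 31 \<Longrightarrow> d1_coeff F i j k = 0"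
  by (simp add: cocycle_coeffs_def)

lemma coboundary_coeffsI:
  assumes "\<forall>i\<in>g3_m_index. \<forall>n<31. g3_deg n = g3_deg i + d \<longrightarrow> F i n = d0_coeff v i n"
    and "\<forall>l. (31 \<le> l \<or> g3_deg l \<noteq> d) \<longrightarrow> v l = 0"
  shows "coboundary_coeffs d F"
  using assms unfolding coboundary_coeffs_def by blast

lemma coboundary_coeffs_zeroI:
  assumes "\<forall>i\<in>g3_m_index. \<forall>n<31. g3_deg n = g3_deg i + d \<longrightarrow> F i n = 0"
  shows "coboundary_coeffs d F"
  using assms by (intro coboundary_coeffsI[of d F "\<lambda>_. 0"]) (simp_all add: d0_coeff_def ad_coeff_eq_0)

lemma g3_Z1_cocycle_coeffs:
  assumes "\<phi> \<in> g3_Z1 d"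
  shows "cocycle_coeffs d (\<lambda>a b. \<phi> (g3_basis a) b)"
proof -
  have "\<phi> (g3_basis i) \<in> g3_grade (g3_deg i + d)" if "i \<in> g3_m_index" for i
    using assms that g3_basis_grade[of i] by (auto simp: g3_Z1_def g3_C1_def g3_m_index_def)
  then show ?thesis
    using g3_Z1_d1_coeff[OF assms] by (auto simp: cocycle_coeffs_def g3_grade_iff)
qed

lemma cocycle_coeffs_linear:
  fixes h :: "complex \<Rightarrow> real"
  assumes "linear h" and "cocycle_coeffs d F"
  shows "cocycle_coeffs d (\<lambda>a b. h (F a b))"
  using assms by (simp add: cocycle_coeffs_def linear_0 flip: linear_d1_coeff)

lemma coboundary_coeffs_Re_Im:
  fixes F :: "nat \<Rightarrow> nat \<Rightarrow> complex"
  assumes "coboundary_coeffs d (\<lambda>a b. Re (F a b))" and "coboundary_coeffs d (\<lambda>a b. Im (F a b))"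
  shows "coboundary_coeffs d F"
proof -
  obtain vr vi where
      vr: "\<forall>l. (31 \<le> l \<or> g3_deg l \<noteq> d) \<longrightarrow> vr l = 0"
        "\<forall>i\<in>g3_m_index. \<forall>n<31. g3_deg n = g3_deg i + d \<longrightarrow> Re (F i n) = d0_coeff vr i n"
    and vi: "\<forall>l. (31 \<le> l \<or> g3_deg l \<noteq> d) \<longrightarrow> vi l = 0"
        "\<forall>i\<in>g3_m_index. \<forall>n<31. g3_deg n = g3_deg i + d \<longrightarrow> Im (F i n) = d0_coeff vi i n"
    using assms unfolding coboundary_coeffs_def by blast
  let ?v = "\<lambda>l. Complex (vr l) (vi l)"
  have "Re (d0_coeff ?v i n) = d0_coeff vr i n" "Im (d0_coeff ?v i n) = d0_coeff vi i n" for i n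
    using linear_d0_coeff[OF bounded_linear.linear[OF bounded_linear_Re], of ?v]
      linear_d0_coeff[OF bounded_linear.linear[OF bounded_linear_Im], of ?v] by simp_all
  then show ?thesis
    using vr vi unfolding coboundary_coeffs_def
    by (intro exI[of _ ?v]) (auto simp: complex_eq_iff)
qed

lemma g3_B1_if_coboundary_coeffs:
  assumes C1: "\<phi> \<in> g3_C1 d" and cob: "coboundary_coeffs d (\<lambda>a b. \<phi> (g3_basis a) b)"
  shows "\<phi> \<in> g3_B1 d"
proof -
  obtain v where v0: "\<And>l. 31 \<le> l \<or> g3_deg l \<noteq> d \<Longrightarrow> v l = 0"
    and v: "\<And>i n. i \<in> g3_m_index \<Longrightarrow> n < 31 \<Longrightarrow> g3_deg n = g3_deg i + d \<Longrightarrow> \<phi> (g3_basis i) n = d0_coeff v i n"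
    using cob unfolding coboundary_coeffs_def by blast
  have entries: "\<phi> (g3_basis i) n = d0_coeff v i n" if i: "i \<in> g3_m_index" and n: "n < 31" for i n
  proof (cases "g3_deg n = g3_deg i + d")
    case False
    have "\<phi> (g3_basis i) \<in> g3_grade (g3_deg i + d)"
      using C1 i g3_basis_grade[of i] by (auto simp: g3_C1_def g3_m_index_def)
    then have "\<phi> (g3_basis i) n = 0"
      using False n by (simp add: g3_grade_iff)
    moreover have "d0_coeff v i n = 0"
      by (rule d0_coeff_eq_0) (use v0 False in auto)
    ultimately show ?thesis by simp
  qed (use v i n in blast)
  have "\<phi> x n = g3_d0 v a x n" if x: "x \<in> g3_m \<inter> g3_hom a" for a x n
  proof (cases "n < 31")
    case True
    then show ?thesis
      using x entries g3_C1_expand[OF C1, of x] by (simp add: g3_d0_coeff)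
  next
    case False
    then show ?thesis
      using C1 x by (auto simp: g3_C1_def g3_space_def g3_d0_def g3_br_eq_0_outside)
  qed
  moreover have "v \<in> g3_grade d"
    using v0 by (auto simp: g3_grade_iff g3_space_def)
  ultimately show ?thesis
    using C1 unfolding g3_B1_def by blast
qed

lemma coboundary_coeffs_deg_gt_10:
  assumes "10 < d"
  shows "coboundary_coeffs d F"
proof (rule coboundary_coeffs_zeroI)
  have "\<forall>n<31. g3_deg n \<le> 5" by (simp only: all_less_31_iff) simp
  moreover have "\<forall>i\<in>g3_m_index. -5 \<le> g3_deg i" by (simp add: g3_m_index_eq)
  ultimately show "\<forall>i\<in>g3_m_index. \<forall>n<31. g3_deg n = g3_deg i + d \<longrightarrow> F i n = 0"
    using assms by force
qed

(* In each degree, e_i_j_k is the cocycle equation for (e_i, e_j) at e_k. *)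
lemma cocycle_coeffs_exact_deg0:
  fixes F :: "nat \<Rightarrow> nat \<Rightarrow> real"
  assumes "cocycle_coeffs 0 F"
  shows "coboundary_coeffs 0 F"
proof -
  note [simp] = cocycle_coeffs_vanish[OF assms] d1_coeff_def d0_coeff_def ad_coeff_def br_pair_def
    g3_row_eval g3_m_index_eq algebra_simps
  note e_3_5_6 = cocycle_coeffs_d1[OF assms, of 3 5 6, simplified]
    and e_3_5_23 = cocycle_coeffs_d1[OF assms, of 3 5 23, simplified]
    and e_3_5_24 = cocycle_coeffs_d1[OF assms, of 3 5 24, simplified]
    and e_3_6_12 = cocycle_coeffs_d1[OF assms, of 3 6 12, simplified]
    and e_3_8_5 = cocycle_coeffs_d1[OF assms, of 3 8 5, simplified]
    and e_3_8_27 = cocycle_coeffs_d1[OF assms, of 3 8 27, simplified]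
    and e_3_8_28 = cocycle_coeffs_d1[OF assms, of 3 8 28, simplified]
    and e_3_12_13 = cocycle_coeffs_d1[OF assms, of 3 12 13, simplified]
    and e_3_23_12 = cocycle_coeffs_d1[OF assms, of 3 23 12, simplified]
    and e_3_24_12 = cocycle_coeffs_d1[OF assms, of 3 24 12, simplified]
    and e_3_25_5 = cocycle_coeffs_d1[OF assms, of 3 25 5, simplified]
    and e_3_26_5 = cocycle_coeffs_d1[OF assms, of 3 26 5, simplified]
    and e_3_27_23 = cocycle_coeffs_d1[OF assms, of 3 27 23, simplified]
    and e_3_27_24 = cocycle_coeffs_d1[OF assms, of 3 27 24, simplified]
    and e_3_28_23 = cocycle_coeffs_d1[OF assms, of 3 28 23, simplified]
    and e_3_28_24 = cocycle_coeffs_d1[OF assms, of 3 28 24, simplified]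
    and e_5_6_13 = cocycle_coeffs_d1[OF assms, of 5 6 13, simplified]
    and e_5_8_6 = cocycle_coeffs_d1[OF assms, of 5 8 6, simplified]
    and e_5_8_23 = cocycle_coeffs_d1[OF assms, of 5 8 23, simplified]
    and e_5_8_24 = cocycle_coeffs_d1[OF assms, of 5 8 24, simplified]
    and e_5_25_23 = cocycle_coeffs_d1[OF assms, of 5 25 23, simplified]
    and e_5_25_24 = cocycle_coeffs_d1[OF assms, of 5 25 24, simplified]
    and e_5_26_23 = cocycle_coeffs_d1[OF assms, of 5 26 23, simplified]
    and e_5_26_24 = cocycle_coeffs_d1[OF assms, of 5 26 24, simplified]
    and e_6_25_12 = cocycle_coeffs_d1[OF assms, of 6 25 12, simplified]
    and e_6_26_12 = cocycle_coeffs_d1[OF assms, of 6 26 12, simplified]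
    and e_6_27_13 = cocycle_coeffs_d1[OF assms, of 6 27 13, simplified]
    and e_6_28_13 = cocycle_coeffs_d1[OF assms, of 6 28 13, simplified]
    and e_23_26_12 = cocycle_coeffs_d1[OF assms, of 23 26 12, simplified]
  define v where "v l = (if l = 0 then F 3 3
      else if l = 1 then F 6 6
      else if l = 14 then F 6 6 - F 23 23
      else if l = 15 then - F 24 23
      else if l = 16 then - F 23 24
      else if l = 17 then F 3 25
      else if l = 18 then F 3 26 else 0)" for l :: nat
  have "F 3 3 = d0_coeff v 3 3" by (simp add: v_def; linarith)
  moreover have "F 3 8 = d0_coeff v 3 8" by (simp add: v_def; use e_3_12_13 in linarith)
  moreover have "F 3 25 = d0_coeff v 3 25" by (simp add: v_def; linarith)
  moreover have "F 3 26 = d0_coeff v 3 26" by (simp add: v_def; linarith)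
  moreover have "F 5 5 = d0_coeff v 5 5" by (simp add: v_def; use e_3_5_6 in linarith)
  moreover have "F 5 27 = d0_coeff v 5 27" by (simp add: v_def; use e_3_8_27 in linarith)
  moreover have "F 5 28 = d0_coeff v 5 28" by (simp add: v_def; use e_3_8_28 in linarith)
  moreover have "F 6 6 = d0_coeff v 6 6" by (simp add: v_def; linarith)
  moreover have "F 6 23 = d0_coeff v 6 23" by (simp add: v_def; use e_3_8_27 e_3_5_23 in linarith)
  moreover have "F 6 24 = d0_coeff v 6 24" by (simp add: v_def; use e_3_8_28 e_3_5_24 in linarith)
  moreover have "F 8 3 = d0_coeff v 8 3" by (simp add: v_def; use e_5_8_6 in linarith)
  moreover have "F 8 8 = d0_coeff v 8 8" by (simp add: v_def; use e_3_5_6 e_3_8_5 in linarith)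
  moreover have "F 8 25 = d0_coeff v 8 25" by (simp add: v_def; use e_5_8_23 in linarith)
  moreover have "F 8 26 = d0_coeff v 8 26" by (simp add: v_def; use e_5_8_24 in linarith)
  moreover have "F 12 12 = d0_coeff v 12 12" by (simp add: v_def; use e_3_6_12 in linarith)
  moreover have "F 13 13 = d0_coeff v 13 13" by (simp add: v_def; use e_3_5_6 e_5_6_13 in linarith)
  moreover have "F 23 6 = d0_coeff v 23 6" by (simp add: v_def; use e_3_23_12 in linarith)
  moreover have "F 23 23 = d0_coeff v 23 23" by (simp add: v_def; linarith)
  moreover have "F 23 24 = d0_coeff v 23 24" by (simp add: v_def; linarith)
  moreover have "F 24 6 = d0_coeff v 24 6" by (simp add: v_def; use e_3_24_12 in linarith)
  moreover have "F 24 23 = d0_coeff v 24 23" by (simp add: v_def; linarith)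
  moreover have "F 24 24 = d0_coeff v 24 24" by (simp add: v_def; use e_3_5_6 e_3_6_12 e_5_26_24 e_23_26_12 in linarith)
  moreover have "F 25 3 = d0_coeff v 25 3" by (simp add: v_def; use e_3_8_28 e_6_25_12 e_3_5_24 in linarith)
  moreover have "F 25 8 = d0_coeff v 25 8" by (simp add: v_def; use e_3_25_5 in linarith)
  moreover have "F 25 25 = d0_coeff v 25 25" by (simp add: v_def; use e_3_5_6 e_5_25_23 in linarith)
  moreover have "F 25 26 = d0_coeff v 25 26" by (simp add: v_def; use e_5_25_24 in linarith)
  moreover have "F 26 3 = d0_coeff v 26 3" by (simp add: v_def; use e_3_8_27 e_6_26_12 e_3_5_23 in linarith)
  moreover have "F 26 8 = d0_coeff v 26 8" by (simp add: v_def; use e_3_26_5 in linarith)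
  moreover have "F 26 25 = d0_coeff v 26 25" by (simp add: v_def; use e_5_26_23 in linarith)
  moreover have "F 26 26 = d0_coeff v 26 26" by (simp add: v_def; use e_3_6_12 e_23_26_12 in linarith)
  moreover have "F 27 5 = d0_coeff v 27 5" by (simp add: v_def; use e_3_8_28 e_3_5_24 e_6_27_13 in linarith)
  moreover have "F 27 27 = d0_coeff v 27 27" by (simp add: v_def; use e_3_27_23 in linarith)
  moreover have "F 27 28 = d0_coeff v 27 28" by (simp add: v_def; use e_3_27_24 in linarith)
  moreover have "F 28 5 = d0_coeff v 28 5" by (simp add: v_def; use e_3_8_27 e_3_5_23 e_6_28_13 in linarith)
  moreover have "F 28 27 = d0_coeff v 28 27" by (simp add: v_def; use e_3_28_23 in linarith)
  moreover have "F 28 28 = d0_coeff v 28 28" by (simp add: v_def; use e_3_5_6 e_3_6_12 e_3_28_24 e_5_26_24 e_23_26_12 in linarith)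
  ultimately have "\<forall>i\<in>g3_m_index. \<forall>n<31. g3_deg n = g3_deg i + 0 \<longrightarrow> F i n = d0_coeff v i n"
    by (simp only: g3_m_index_eq ball_simps all_less_31_iff) (simp del: d0_coeff_def)
  then show ?thesis by (rule coboundary_coeffsI) (simp add: v_def)
qed

lemma cocycle_coeffs_exact_deg1:
  fixes F :: "nat \<Rightarrow> nat \<Rightarrow> real"
  assumes "cocycle_coeffs 1 F"
  shows "coboundary_coeffs 1 F"
proof -
  note [simp] = cocycle_coeffs_vanish[OF assms] d1_coeff_def d0_coeff_def ad_coeff_def br_pair_def
    g3_row_eval g3_m_index_eq algebra_simps
  note e_3_5_27 = cocycle_coeffs_d1[OF assms, of 3 5 27, simplified]
    and e_3_5_28 = cocycle_coeffs_d1[OF assms, of 3 5 28, simplified]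
    and e_3_6_6 = cocycle_coeffs_d1[OF assms, of 3 6 6, simplified]
    and e_3_6_23 = cocycle_coeffs_d1[OF assms, of 3 6 23, simplified]
    and e_3_6_24 = cocycle_coeffs_d1[OF assms, of 3 6 24, simplified]
    and e_3_8_3 = cocycle_coeffs_d1[OF assms, of 3 8 3, simplified]
    and e_3_8_8 = cocycle_coeffs_d1[OF assms, of 3 8 8, simplified]
    and e_3_13_13 = cocycle_coeffs_d1[OF assms, of 3 13 13, simplified]
    and e_3_23_6 = cocycle_coeffs_d1[OF assms, of 3 23 6, simplified]
    and e_3_23_23 = cocycle_coeffs_d1[OF assms, of 3 23 23, simplified]
    and e_3_23_24 = cocycle_coeffs_d1[OF assms, of 3 23 24, simplified]
    and e_3_24_6 = cocycle_coeffs_d1[OF assms, of 3 24 6, simplified]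
    and e_3_24_23 = cocycle_coeffs_d1[OF assms, of 3 24 23, simplified]
    and e_3_24_24 = cocycle_coeffs_d1[OF assms, of 3 24 24, simplified]
    and e_3_25_3 = cocycle_coeffs_d1[OF assms, of 3 25 3, simplified]
    and e_3_26_3 = cocycle_coeffs_d1[OF assms, of 3 26 3, simplified]
    and e_5_6_12 = cocycle_coeffs_d1[OF assms, of 5 6 12, simplified]
    and e_5_12_13 = cocycle_coeffs_d1[OF assms, of 5 12 13, simplified]
    and e_5_23_12 = cocycle_coeffs_d1[OF assms, of 5 23 12, simplified]
    and e_5_24_12 = cocycle_coeffs_d1[OF assms, of 5 24 12, simplified]
    and e_5_27_23 = cocycle_coeffs_d1[OF assms, of 5 27 23, simplified]
    and e_5_27_24 = cocycle_coeffs_d1[OF assms, of 5 27 24, simplified]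
    and e_5_28_23 = cocycle_coeffs_d1[OF assms, of 5 28 23, simplified]
    and e_5_28_24 = cocycle_coeffs_d1[OF assms, of 5 28 24, simplified]
    and e_6_8_6 = cocycle_coeffs_d1[OF assms, of 6 8 6, simplified]
    and e_6_8_23 = cocycle_coeffs_d1[OF assms, of 6 8 23, simplified]
    and e_6_8_24 = cocycle_coeffs_d1[OF assms, of 6 8 24, simplified]
    and e_6_25_6 = cocycle_coeffs_d1[OF assms, of 6 25 6, simplified]
    and e_6_25_23 = cocycle_coeffs_d1[OF assms, of 6 25 23, simplified]
    and e_6_25_24 = cocycle_coeffs_d1[OF assms, of 6 25 24, simplified]
    and e_6_26_6 = cocycle_coeffs_d1[OF assms, of 6 26 6, simplified]
    and e_6_26_23 = cocycle_coeffs_d1[OF assms, of 6 26 23, simplified]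
    and e_6_26_24 = cocycle_coeffs_d1[OF assms, of 6 26 24, simplified]
    and e_6_27_12 = cocycle_coeffs_d1[OF assms, of 6 27 12, simplified]
    and e_6_28_12 = cocycle_coeffs_d1[OF assms, of 6 28 12, simplified]
    and e_8_23_23 = cocycle_coeffs_d1[OF assms, of 8 23 23, simplified]
    and e_8_23_24 = cocycle_coeffs_d1[OF assms, of 8 23 24, simplified]
    and e_8_24_23 = cocycle_coeffs_d1[OF assms, of 8 24 23, simplified]
    and e_12_27_13 = cocycle_coeffs_d1[OF assms, of 12 27 13, simplified]
    and e_12_28_13 = cocycle_coeffs_d1[OF assms, of 12 28 13, simplified]
    and e_23_23_13 = cocycle_coeffs_d1[OF assms, of 23 23 13, simplified]
    and e_23_24_13 = cocycle_coeffs_d1[OF assms, of 23 24 13, simplified]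
    and e_23_25_24 = cocycle_coeffs_d1[OF assms, of 23 25 24, simplified]
    and e_23_26_24 = cocycle_coeffs_d1[OF assms, of 23 26 24, simplified]
    and e_24_24_13 = cocycle_coeffs_d1[OF assms, of 24 24 13, simplified]
    and e_24_25_23 = cocycle_coeffs_d1[OF assms, of 24 25 23, simplified]
    and e_24_26_23 = cocycle_coeffs_d1[OF assms, of 24 26 23, simplified]
    and e_25_25_25 = cocycle_coeffs_d1[OF assms, of 25 25 25, simplified]
    and e_26_26_26 = cocycle_coeffs_d1[OF assms, of 26 26 26, simplified]
  define v where "v l = (if l = 2 then - F 3 0
      else if l = 10 then - F 5 3
      else if l = 19 then 2 * F 3 17
      else if l = 20 then 2 * F 3 18 else 0)" for l :: nat
  have "F 3 0 = d0_coeff v 3 0" by (simp add: v_def; linarith)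
  moreover have "F 3 1 = d0_coeff v 3 1" by (simp add: v_def; use e_3_13_13 in linarith)
  moreover have "F 3 14 = d0_coeff v 3 14" by (simp add: v_def; use e_3_23_23 e_23_24_13 e_3_24_24 in linarith)
  moreover have "F 3 15 = d0_coeff v 3 15" by (simp add: v_def; use e_3_24_23 e_24_24_13 in linarith)
  moreover have "F 3 16 = d0_coeff v 3 16" by (simp add: v_def; use e_3_23_24 e_23_23_13 in linarith)
  moreover have "F 3 17 = d0_coeff v 3 17" by (simp add: v_def; linarith)
  moreover have "F 3 18 = d0_coeff v 3 18" by (simp add: v_def; linarith)
  moreover have "F 5 3 = d0_coeff v 5 3" by (simp add: v_def; linarith)
  moreover have "F 5 8 = d0_coeff v 5 8" by (simp add: v_def; use e_3_13_13 e_3_8_8 in linarith)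
  moreover have "F 5 25 = d0_coeff v 5 25" by (simp add: v_def; use e_5_24_12 in linarith)
  moreover have "F 5 26 = d0_coeff v 5 26" by (simp add: v_def; use e_5_23_12 in linarith)
  moreover have "F 6 5 = d0_coeff v 6 5" by (simp add: v_def; use e_3_6_6 e_3_8_8 e_5_12_13 in linarith)
  moreover have "F 6 27 = d0_coeff v 6 27" by (simp add: v_def; use e_3_5_27 in linarith)
  moreover have "F 6 28 = d0_coeff v 6 28" by (simp add: v_def; use e_3_5_28 in linarith)
  moreover have "F 8 0 = d0_coeff v 8 0" by (simp add: v_def; use e_3_8_3 in linarith)
  moreover have "F 8 1 = d0_coeff v 8 1" by (simp add: v_def; use e_6_8_6 in linarith)
  moreover have "F 8 14 = d0_coeff v 8 14" by (simp add: v_def; use e_8_23_23 e_6_8_6 in linarith)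
  moreover have "F 8 15 = d0_coeff v 8 15" by (simp add: v_def; use e_8_24_23 in linarith)
  moreover have "F 8 16 = d0_coeff v 8 16" by (simp add: v_def; use e_8_23_24 in linarith)
  moreover have "F 8 17 = d0_coeff v 8 17" by (simp add: v_def; use e_6_8_23 in linarith)
  moreover have "F 8 18 = d0_coeff v 8 18" by (simp add: v_def; use e_6_8_24 in linarith)
  moreover have "F 12 6 = d0_coeff v 12 6" by (simp add: v_def; use e_3_13_13 e_3_8_8 e_5_12_13 in linarith)
  moreover have "F 12 23 = d0_coeff v 12 23" by (simp add: v_def; use e_3_5_27 e_3_6_23 in linarith)
  moreover have "F 12 24 = d0_coeff v 12 24" by (simp add: v_def; use e_3_5_28 e_3_6_24 in linarith)
  moreover have "F 13 12 = d0_coeff v 13 12" by (simp add: v_def; use e_5_6_12 in linarith)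
  moreover have "F 23 5 = d0_coeff v 23 5" by (simp add: v_def; use e_3_23_6 in linarith)
  moreover have "F 23 27 = d0_coeff v 23 27" by (simp add: v_def; use e_3_13_13 e_23_24_13 e_3_24_24 e_3_23_23 in linarith)
  moreover have "F 23 28 = d0_coeff v 23 28" by (simp add: v_def; use e_23_23_13 in linarith)
  moreover have "F 24 5 = d0_coeff v 24 5" by (simp add: v_def; use e_3_24_6 in linarith)
  moreover have "F 24 27 = d0_coeff v 24 27" by (simp add: v_def; use e_24_24_13 in linarith)
  moreover have "F 24 28 = d0_coeff v 24 28" by (simp add: v_def; use e_3_13_13 e_3_24_24 e_3_23_23 e_23_24_13 in linarith)
  moreover have "F 25 0 = d0_coeff v 25 0" by (simp add: v_def; use e_3_25_3 in linarith)
  moreover have "F 25 1 = d0_coeff v 25 1" by (simp add: v_def; use e_3_5_28 e_6_25_6 in linarith)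
  moreover have "F 25 14 = d0_coeff v 25 14" by (simp add: v_def; use e_3_25_3 e_25_25_25 in linarith)
  moreover have "F 25 15 = d0_coeff v 25 15" by (simp add: v_def; use e_3_5_27 e_3_24_6 e_3_6_23 e_24_25_23 in linarith)
  moreover have "F 25 16 = d0_coeff v 25 16" by (simp add: v_def; use e_23_25_24 in linarith)
  moreover have "F 25 17 = d0_coeff v 25 17" by (simp add: v_def; use e_6_25_23 e_3_6_6 e_3_8_8 e_5_12_13 in linarith)
  moreover have "F 25 18 = d0_coeff v 25 18" by (simp add: v_def; use e_6_25_24 in linarith)
  moreover have "F 26 0 = d0_coeff v 26 0" by (simp add: v_def; use e_3_26_3 in linarith)
  moreover have "F 26 1 = d0_coeff v 26 1" by (simp add: v_def; use e_3_5_27 e_6_26_6 in linarith)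
  moreover have "F 26 14 = d0_coeff v 26 14" by (simp add: v_def; use e_3_26_3 e_26_26_26 in linarith)
  moreover have "F 26 15 = d0_coeff v 26 15" by (simp add: v_def; use e_24_26_23 in linarith)
  moreover have "F 26 16 = d0_coeff v 26 16" by (simp add: v_def; use e_3_5_28 e_3_23_6 e_3_6_24 e_23_26_24 in linarith)
  moreover have "F 26 17 = d0_coeff v 26 17" by (simp add: v_def; use e_6_26_23 in linarith)
  moreover have "F 26 18 = d0_coeff v 26 18" by (simp add: v_def; use e_3_6_6 e_6_26_24 e_3_8_8 e_5_12_13 in linarith)
  moreover have "F 27 3 = d0_coeff v 27 3" by (simp add: v_def; use e_6_27_12 in linarith)
  moreover have "F 27 8 = d0_coeff v 27 8" by (simp add: v_def; use e_3_5_28 e_3_6_24 e_12_27_13 in linarith)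
  moreover have "F 27 25 = d0_coeff v 27 25" by (simp add: v_def; use e_5_27_23 in linarith)
  moreover have "F 27 26 = d0_coeff v 27 26" by (simp add: v_def; use e_5_27_24 in linarith)
  moreover have "F 28 3 = d0_coeff v 28 3" by (simp add: v_def; use e_6_28_12 in linarith)
  moreover have "F 28 8 = d0_coeff v 28 8" by (simp add: v_def; use e_3_5_27 e_3_6_23 e_12_28_13 in linarith)
  moreover have "F 28 25 = d0_coeff v 28 25" by (simp add: v_def; use e_5_28_23 in linarith)
  moreover have "F 28 26 = d0_coeff v 28 26" by (simp add: v_def; use e_5_28_24 in linarith)
  ultimately have "\<forall>i\<in>g3_m_index. \<forall>n<31. g3_deg n = g3_deg i + 1 \<longrightarrow> F i n = d0_coeff v i n"
    by (simp only: g3_m_index_eq ball_simps all_less_31_iff) (simp del: d0_coeff_def)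
  then show ?thesis by (rule coboundary_coeffsI) (simp add: v_def)
qed

lemma cocycle_coeffs_exact_deg2:
  fixes F :: "nat \<Rightarrow> nat \<Rightarrow> real"
  assumes "cocycle_coeffs 2 F"
  shows "coboundary_coeffs 2 F"
proof -
  note [simp] = cocycle_coeffs_vanish[OF assms] d1_coeff_def d0_coeff_def ad_coeff_def br_pair_def
    g3_row_eval g3_m_index_eq algebra_simps
  note e_3_5_8 = cocycle_coeffs_d1[OF assms, of 3 5 8, simplified]
    and e_3_5_25 = cocycle_coeffs_d1[OF assms, of 3 5 25, simplified]
    and e_3_5_26 = cocycle_coeffs_d1[OF assms, of 3 5 26, simplified]
    and e_3_6_27 = cocycle_coeffs_d1[OF assms, of 3 6 27, simplified]
    and e_3_6_28 = cocycle_coeffs_d1[OF assms, of 3 6 28, simplified]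
    and e_3_8_1 = cocycle_coeffs_d1[OF assms, of 3 8 1, simplified]
    and e_3_8_14 = cocycle_coeffs_d1[OF assms, of 3 8 14, simplified]
    and e_3_8_15 = cocycle_coeffs_d1[OF assms, of 3 8 15, simplified]
    and e_3_8_16 = cocycle_coeffs_d1[OF assms, of 3 8 16, simplified]
    and e_3_8_17 = cocycle_coeffs_d1[OF assms, of 3 8 17, simplified]
    and e_3_8_18 = cocycle_coeffs_d1[OF assms, of 3 8 18, simplified]
    and e_3_12_6 = cocycle_coeffs_d1[OF assms, of 3 12 6, simplified]
    and e_3_13_12 = cocycle_coeffs_d1[OF assms, of 3 13 12, simplified]
    and e_3_23_5 = cocycle_coeffs_d1[OF assms, of 3 23 5, simplified]
    and e_3_23_27 = cocycle_coeffs_d1[OF assms, of 3 23 27, simplified]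
    and e_3_24_5 = cocycle_coeffs_d1[OF assms, of 3 24 5, simplified]
    and e_3_25_14 = cocycle_coeffs_d1[OF assms, of 3 25 14, simplified]
    and e_3_25_15 = cocycle_coeffs_d1[OF assms, of 3 25 15, simplified]
    and e_3_25_18 = cocycle_coeffs_d1[OF assms, of 3 25 18, simplified]
    and e_3_26_17 = cocycle_coeffs_d1[OF assms, of 3 26 17, simplified]
    and e_3_27_3 = cocycle_coeffs_d1[OF assms, of 3 27 3, simplified]
    and e_3_28_3 = cocycle_coeffs_d1[OF assms, of 3 28 3, simplified]
    and e_5_8_3 = cocycle_coeffs_d1[OF assms, of 5 8 3, simplified]
    and e_5_12_12 = cocycle_coeffs_d1[OF assms, of 5 12 12, simplified]
    and e_5_23_6 = cocycle_coeffs_d1[OF assms, of 5 23 6, simplified]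
    and e_5_24_6 = cocycle_coeffs_d1[OF assms, of 5 24 6, simplified]
    and e_6_8_5 = cocycle_coeffs_d1[OF assms, of 6 8 5, simplified]
    and e_6_25_5 = cocycle_coeffs_d1[OF assms, of 6 25 5, simplified]
    and e_6_26_5 = cocycle_coeffs_d1[OF assms, of 6 26 5, simplified]
    and e_6_27_6 = cocycle_coeffs_d1[OF assms, of 6 27 6, simplified]
    and e_6_27_23 = cocycle_coeffs_d1[OF assms, of 6 27 23, simplified]
    and e_6_27_24 = cocycle_coeffs_d1[OF assms, of 6 27 24, simplified]
    and e_6_28_6 = cocycle_coeffs_d1[OF assms, of 6 28 6, simplified]
    and e_6_28_23 = cocycle_coeffs_d1[OF assms, of 6 28 23, simplified]
    and e_6_28_24 = cocycle_coeffs_d1[OF assms, of 6 28 24, simplified]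
    and e_8_12_6 = cocycle_coeffs_d1[OF assms, of 8 12 6, simplified]
    and e_8_12_23 = cocycle_coeffs_d1[OF assms, of 8 12 23, simplified]
    and e_8_12_24 = cocycle_coeffs_d1[OF assms, of 8 12 24, simplified]
    and e_8_23_27 = cocycle_coeffs_d1[OF assms, of 8 23 27, simplified]
    and e_8_23_28 = cocycle_coeffs_d1[OF assms, of 8 23 28, simplified]
    and e_8_24_27 = cocycle_coeffs_d1[OF assms, of 8 24 27, simplified]
    and e_8_24_28 = cocycle_coeffs_d1[OF assms, of 8 24 28, simplified]
    and e_8_25_14 = cocycle_coeffs_d1[OF assms, of 8 25 14, simplified]
    and e_8_25_15 = cocycle_coeffs_d1[OF assms, of 8 25 15, simplified]
    and e_8_25_16 = cocycle_coeffs_d1[OF assms, of 8 25 16, simplified]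
    and e_8_26_14 = cocycle_coeffs_d1[OF assms, of 8 26 14, simplified]
    and e_8_26_15 = cocycle_coeffs_d1[OF assms, of 8 26 15, simplified]
    and e_8_26_16 = cocycle_coeffs_d1[OF assms, of 8 26 16, simplified]
    and e_13_25_12 = cocycle_coeffs_d1[OF assms, of 13 25 12, simplified]
    and e_13_26_12 = cocycle_coeffs_d1[OF assms, of 13 26 12, simplified]
    and e_25_25_15 = cocycle_coeffs_d1[OF assms, of 25 25 15, simplified]
    and e_26_26_16 = cocycle_coeffs_d1[OF assms, of 26 26 16, simplified]
  define v where "v l = (if l = 4 then - 2 / 3 * F 3 10
      else if l = 21 then 2 * F 5 17
      else if l = 22 then 2 * F 5 18 else 0)" for l :: nat
  have "F 3 2 = d0_coeff v 3 2" by (simp add: v_def; use e_3_23_27 in linarith)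
  moreover have "F 3 10 = d0_coeff v 3 10" by (simp add: v_def; linarith)
  moreover have "F 3 19 = d0_coeff v 3 19" by (simp add: v_def; use e_3_25_15 in linarith)
  moreover have "F 3 20 = d0_coeff v 3 20" by (simp add: v_def; use e_3_25_14 in linarith)
  moreover have "F 5 0 = d0_coeff v 5 0" by (simp add: v_def; use e_3_13_12 e_5_12_12 e_3_8_1 e_8_12_6 in linarith)
  moreover have "F 5 1 = d0_coeff v 5 1" by (simp add: v_def; use e_3_8_1 e_3_13_12 e_8_12_6 in linarith)
  moreover have "F 5 14 = d0_coeff v 5 14" by (simp add: v_def; use e_3_8_14 in linarith)
  moreover have "F 5 15 = d0_coeff v 5 15" by (simp add: v_def; use e_3_8_15 in linarith)
  moreover have "F 5 16 = d0_coeff v 5 16" by (simp add: v_def; use e_3_8_16 in linarith)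
  moreover have "F 5 17 = d0_coeff v 5 17" by (simp add: v_def; linarith)
  moreover have "F 5 18 = d0_coeff v 5 18" by (simp add: v_def; linarith)
  moreover have "F 6 3 = d0_coeff v 6 3" by (simp add: v_def; use e_3_13_12 e_6_8_5 e_8_12_6 in linarith)
  moreover have "F 6 8 = d0_coeff v 6 8" by (simp add: v_def; use e_3_5_8 e_3_23_27 in linarith)
  moreover have "F 6 25 = d0_coeff v 6 25" by (simp add: v_def; use e_3_5_25 in linarith)
  moreover have "F 6 26 = d0_coeff v 6 26" by (simp add: v_def; use e_3_5_26 in linarith)
  moreover have "F 8 2 = d0_coeff v 8 2" by (simp add: v_def; use e_3_13_12 e_8_12_6 in linarith)
  moreover have "F 8 10 = d0_coeff v 8 10" by (simp add: v_def; use e_5_8_3 in linarith)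
  moreover have "F 8 19 = d0_coeff v 8 19" by (simp add: v_def; use e_3_8_17 in linarith)
  moreover have "F 8 20 = d0_coeff v 8 20" by (simp add: v_def; use e_3_8_18 in linarith)
  moreover have "F 12 5 = d0_coeff v 12 5" by (simp add: v_def; use e_3_12_6 e_3_23_27 in linarith)
  moreover have "F 12 27 = d0_coeff v 12 27" by (simp add: v_def; use e_3_6_27 e_3_25_15 in linarith)
  moreover have "F 12 28 = d0_coeff v 12 28" by (simp add: v_def; use e_3_6_28 e_3_25_14 in linarith)
  moreover have "F 13 6 = d0_coeff v 13 6" by (simp add: v_def; use e_3_13_12 in linarith)
  moreover have "F 13 23 = d0_coeff v 13 23" by (simp add: v_def; use e_3_8_17 e_8_12_23 in linarith)
  moreover have "F 13 24 = d0_coeff v 13 24" by (simp add: v_def; use e_3_8_18 e_8_12_24 in linarith)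
  moreover have "F 23 3 = d0_coeff v 23 3" by (simp add: v_def; use e_5_23_6 in linarith)
  moreover have "F 23 8 = d0_coeff v 23 8" by (simp add: v_def; use e_3_23_5 e_3_25_14 in linarith)
  moreover have "F 23 25 = d0_coeff v 23 25" by (simp add: v_def; use e_3_13_12 e_8_12_6 e_8_23_27 in linarith)
  moreover have "F 23 26 = d0_coeff v 23 26" by (simp add: v_def; use e_8_23_28 in linarith)
  moreover have "F 24 3 = d0_coeff v 24 3" by (simp add: v_def; use e_5_24_6 in linarith)
  moreover have "F 24 8 = d0_coeff v 24 8" by (simp add: v_def; use e_3_24_5 e_3_25_15 in linarith)
  moreover have "F 24 25 = d0_coeff v 24 25" by (simp add: v_def; use e_8_24_27 in linarith)
  moreover have "F 24 26 = d0_coeff v 24 26" by (simp add: v_def; use e_3_13_12 e_8_12_6 e_8_24_28 in linarith)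
  moreover have "F 25 2 = d0_coeff v 25 2" by (simp add: v_def; use e_6_25_5 in linarith)
  moreover have "F 25 10 = d0_coeff v 25 10" by (simp add: v_def; use e_3_8_18 e_13_25_12 e_8_12_24 in linarith)
  moreover have "F 25 19 = d0_coeff v 25 19" by (simp add: v_def; use e_25_25_15 in linarith)
  moreover have "F 25 20 = d0_coeff v 25 20" by (simp add: v_def; use e_3_25_18 in linarith)
  moreover have "F 26 2 = d0_coeff v 26 2" by (simp add: v_def; use e_6_26_5 in linarith)
  moreover have "F 26 10 = d0_coeff v 26 10" by (simp add: v_def; use e_3_8_17 e_13_26_12 e_8_12_23 in linarith)
  moreover have "F 26 19 = d0_coeff v 26 19" by (simp add: v_def; use e_3_26_17 in linarith)
  moreover have "F 26 20 = d0_coeff v 26 20" by (simp add: v_def; use e_26_26_16 in linarith)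
  moreover have "F 27 0 = d0_coeff v 27 0" by (simp add: v_def; use e_5_23_6 e_3_27_3 in linarith)
  moreover have "F 27 1 = d0_coeff v 27 1" by (simp add: v_def; use e_3_5_26 e_6_27_6 in linarith)
  moreover have "F 27 14 = d0_coeff v 27 14" by (simp add: v_def; use e_3_8_18 e_8_25_14 in linarith)
  moreover have "F 27 15 = d0_coeff v 27 15" by (simp add: v_def; use e_3_8_17 e_8_25_15 in linarith)
  moreover have "F 27 16 = d0_coeff v 27 16" by (simp add: v_def; use e_8_25_16 in linarith)
  moreover have "F 27 17 = d0_coeff v 27 17" by (simp add: v_def; use e_3_13_12 e_6_8_5 e_6_27_23 e_8_12_6 in linarith)
  moreover have "F 27 18 = d0_coeff v 27 18" by (simp add: v_def; use e_6_27_24 in linarith)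
  moreover have "F 28 0 = d0_coeff v 28 0" by (simp add: v_def; use e_5_24_6 e_3_28_3 in linarith)
  moreover have "F 28 1 = d0_coeff v 28 1" by (simp add: v_def; use e_3_5_25 e_6_28_6 in linarith)
  moreover have "F 28 14 = d0_coeff v 28 14" by (simp add: v_def; use e_3_8_17 e_8_26_14 in linarith)
  moreover have "F 28 15 = d0_coeff v 28 15" by (simp add: v_def; use e_8_26_15 in linarith)
  moreover have "F 28 16 = d0_coeff v 28 16" by (simp add: v_def; use e_3_8_18 e_8_26_16 in linarith)
  moreover have "F 28 17 = d0_coeff v 28 17" by (simp add: v_def; use e_6_28_23 in linarith)
  moreover have "F 28 18 = d0_coeff v 28 18" by (simp add: v_def; use e_3_13_12 e_8_12_6 e_6_8_5 e_6_28_24 in linarith)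
  ultimately have "\<forall>i\<in>g3_m_index. \<forall>n<31. g3_deg n = g3_deg i + 2 \<longrightarrow> F i n = d0_coeff v i n"
    by (simp only: g3_m_index_eq ball_simps all_less_31_iff) (simp del: d0_coeff_def)
  then show ?thesis by (rule coboundary_coeffsI) (simp add: v_def)
qed

lemma cocycle_coeffs_exact_deg3:
  fixes F :: "nat \<Rightarrow> nat \<Rightarrow> real"
  assumes "cocycle_coeffs 3 F"
  shows "coboundary_coeffs 3 F"
proof -
  note [simp] = cocycle_coeffs_vanish[OF assms] d1_coeff_def d0_coeff_def ad_coeff_def br_pair_def
    g3_row_eval g3_m_index_eq algebra_simps
  note e_3_5_0 = cocycle_coeffs_d1[OF assms, of 3 5 0, simplified]
    and e_3_5_14 = cocycle_coeffs_d1[OF assms, of 3 5 14, simplified]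
    and e_3_5_15 = cocycle_coeffs_d1[OF assms, of 3 5 15, simplified]
    and e_3_5_16 = cocycle_coeffs_d1[OF assms, of 3 5 16, simplified]
    and e_3_6_8 = cocycle_coeffs_d1[OF assms, of 3 6 8, simplified]
    and e_3_8_2 = cocycle_coeffs_d1[OF assms, of 3 8 2, simplified]
    and e_3_8_19 = cocycle_coeffs_d1[OF assms, of 3 8 19, simplified]
    and e_3_8_20 = cocycle_coeffs_d1[OF assms, of 3 8 20, simplified]
    and e_3_13_6 = cocycle_coeffs_d1[OF assms, of 3 13 6, simplified]
    and e_3_13_23 = cocycle_coeffs_d1[OF assms, of 3 13 23, simplified]
    and e_3_13_24 = cocycle_coeffs_d1[OF assms, of 3 13 24, simplified]
    and e_3_23_3 = cocycle_coeffs_d1[OF assms, of 3 23 3, simplified]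
    and e_3_23_25 = cocycle_coeffs_d1[OF assms, of 3 23 25, simplified]
    and e_3_23_26 = cocycle_coeffs_d1[OF assms, of 3 23 26, simplified]
    and e_3_24_3 = cocycle_coeffs_d1[OF assms, of 3 24 3, simplified]
    and e_3_24_25 = cocycle_coeffs_d1[OF assms, of 3 24 25, simplified]
    and e_3_24_26 = cocycle_coeffs_d1[OF assms, of 3 24 26, simplified]
    and e_3_25_10 = cocycle_coeffs_d1[OF assms, of 3 25 10, simplified]
    and e_3_26_10 = cocycle_coeffs_d1[OF assms, of 3 26 10, simplified]
    and e_3_27_14 = cocycle_coeffs_d1[OF assms, of 3 27 14, simplified]
    and e_3_27_15 = cocycle_coeffs_d1[OF assms, of 3 27 15, simplified]
    and e_3_27_16 = cocycle_coeffs_d1[OF assms, of 3 27 16, simplified]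
    and e_3_28_14 = cocycle_coeffs_d1[OF assms, of 3 28 14, simplified]
    and e_3_28_15 = cocycle_coeffs_d1[OF assms, of 3 28 15, simplified]
    and e_3_28_16 = cocycle_coeffs_d1[OF assms, of 3 28 16, simplified]
    and e_5_8_1 = cocycle_coeffs_d1[OF assms, of 5 8 1, simplified]
    and e_5_8_17 = cocycle_coeffs_d1[OF assms, of 5 8 17, simplified]
    and e_5_8_18 = cocycle_coeffs_d1[OF assms, of 5 8 18, simplified]
    and e_5_12_6 = cocycle_coeffs_d1[OF assms, of 5 12 6, simplified]
    and e_5_12_23 = cocycle_coeffs_d1[OF assms, of 5 12 23, simplified]
    and e_5_12_24 = cocycle_coeffs_d1[OF assms, of 5 12 24, simplified]
    and e_5_13_12 = cocycle_coeffs_d1[OF assms, of 5 13 12, simplified]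
    and e_5_27_3 = cocycle_coeffs_d1[OF assms, of 5 27 3, simplified]
    and e_5_27_8 = cocycle_coeffs_d1[OF assms, of 5 27 8, simplified]
    and e_5_28_3 = cocycle_coeffs_d1[OF assms, of 5 28 3, simplified]
    and e_5_28_8 = cocycle_coeffs_d1[OF assms, of 5 28 8, simplified]
    and e_6_8_8 = cocycle_coeffs_d1[OF assms, of 6 8 8, simplified]
    and e_6_23_6 = cocycle_coeffs_d1[OF assms, of 6 23 6, simplified]
    and e_6_24_6 = cocycle_coeffs_d1[OF assms, of 6 24 6, simplified]
    and e_6_25_3 = cocycle_coeffs_d1[OF assms, of 6 25 3, simplified]
    and e_6_26_3 = cocycle_coeffs_d1[OF assms, of 6 26 3, simplified]
    and e_8_25_19 = cocycle_coeffs_d1[OF assms, of 8 25 19, simplified]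
    and e_8_26_20 = cocycle_coeffs_d1[OF assms, of 8 26 20, simplified]
    and e_12_27_23 = cocycle_coeffs_d1[OF assms, of 12 27 23, simplified]
    and e_12_27_24 = cocycle_coeffs_d1[OF assms, of 12 27 24, simplified]
    and e_12_28_23 = cocycle_coeffs_d1[OF assms, of 12 28 23, simplified]
    and e_12_28_24 = cocycle_coeffs_d1[OF assms, of 12 28 24, simplified]
    and e_13_25_24 = cocycle_coeffs_d1[OF assms, of 13 25 24, simplified]
    and e_13_26_23 = cocycle_coeffs_d1[OF assms, of 13 26 23, simplified]
  define v where "v l = (if l = 7 then - 2 * F 3 4
      else if l = 29 then 2 * F 3 21
      else if l = 30 then 2 * F 3 22 else 0)" for l :: nat
  have "F 3 4 = d0_coeff v 3 4" by (simp add: v_def; linarith)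
  moreover have "F 3 21 = d0_coeff v 3 21" by (simp add: v_def; linarith)
  moreover have "F 3 22 = d0_coeff v 3 22" by (simp add: v_def; linarith)
  moreover have "F 5 2 = d0_coeff v 5 2" by (simp add: v_def; use e_3_8_2 in linarith)
  moreover have "F 5 10 = d0_coeff v 5 10" by (simp add: v_def; use e_5_13_12 in linarith)
  moreover have "F 5 19 = d0_coeff v 5 19" by (simp add: v_def; use e_3_8_19 in linarith)
  moreover have "F 5 20 = d0_coeff v 5 20" by (simp add: v_def; use e_3_8_20 in linarith)
  moreover have "F 6 0 = d0_coeff v 6 0" by (simp add: v_def; use e_3_8_2 e_3_5_0 in linarith)
  moreover have "F 6 1 = d0_coeff v 6 1" by (simp add: v_def; use e_3_8_2 e_3_5_0 e_6_8_8 in linarith)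
  moreover have "F 6 14 = d0_coeff v 6 14" by (simp add: v_def; use e_3_5_14 in linarith)
  moreover have "F 6 15 = d0_coeff v 6 15" by (simp add: v_def; use e_3_5_15 in linarith)
  moreover have "F 6 16 = d0_coeff v 6 16" by (simp add: v_def; use e_3_5_16 in linarith)
  moreover have "F 6 17 = d0_coeff v 6 17" by (simp add: v_def; use e_3_26_10 e_6_26_3 in linarith)
  moreover have "F 6 18 = d0_coeff v 6 18" by (simp add: v_def; use e_3_25_10 e_6_25_3 in linarith)
  moreover have "F 8 4 = d0_coeff v 8 4" by (simp add: v_def; use e_5_8_1 in linarith)
  moreover have "F 8 21 = d0_coeff v 8 21" by (simp add: v_def; use e_5_8_17 in linarith)
  moreover have "F 8 22 = d0_coeff v 8 22" by (simp add: v_def; use e_5_8_18 in linarith)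
  moreover have "F 12 3 = d0_coeff v 12 3" by (simp add: v_def; use e_3_8_2 e_5_12_6 in linarith)
  moreover have "F 12 8 = d0_coeff v 12 8" by (simp add: v_def; use e_3_6_8 in linarith)
  moreover have "F 12 25 = d0_coeff v 12 25" by (simp add: v_def; use e_3_8_19 e_5_12_23 in linarith)
  moreover have "F 12 26 = d0_coeff v 12 26" by (simp add: v_def; use e_3_8_20 e_5_12_24 in linarith)
  moreover have "F 13 5 = d0_coeff v 13 5" by (simp add: v_def; use e_3_13_6 in linarith)
  moreover have "F 13 27 = d0_coeff v 13 27" by (simp add: v_def; use e_3_13_23 in linarith)
  moreover have "F 13 28 = d0_coeff v 13 28" by (simp add: v_def; use e_3_13_24 in linarith)
  moreover have "F 23 0 = d0_coeff v 23 0" by (simp add: v_def; use e_3_23_3 in linarith)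
  moreover have "F 23 1 = d0_coeff v 23 1" by (simp add: v_def; use e_3_25_10 e_6_25_3 e_6_23_6 in linarith)
  moreover have "F 23 14 = d0_coeff v 23 14" by (simp add: v_def; use e_3_27_14 in linarith)
  moreover have "F 23 15 = d0_coeff v 23 15" by (simp add: v_def; use e_3_27_15 in linarith)
  moreover have "F 23 16 = d0_coeff v 23 16" by (simp add: v_def; use e_3_27_16 in linarith)
  moreover have "F 23 17 = d0_coeff v 23 17" by (simp add: v_def; use e_3_23_25 in linarith)
  moreover have "F 23 18 = d0_coeff v 23 18" by (simp add: v_def; use e_3_23_26 in linarith)
  moreover have "F 24 0 = d0_coeff v 24 0" by (simp add: v_def; use e_3_24_3 in linarith)
  moreover have "F 24 1 = d0_coeff v 24 1" by (simp add: v_def; use e_3_26_10 e_6_26_3 e_6_24_6 in linarith)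
  moreover have "F 24 14 = d0_coeff v 24 14" by (simp add: v_def; use e_3_28_14 in linarith)
  moreover have "F 24 15 = d0_coeff v 24 15" by (simp add: v_def; use e_3_28_15 in linarith)
  moreover have "F 24 16 = d0_coeff v 24 16" by (simp add: v_def; use e_3_28_16 in linarith)
  moreover have "F 24 17 = d0_coeff v 24 17" by (simp add: v_def; use e_3_24_25 in linarith)
  moreover have "F 24 18 = d0_coeff v 24 18" by (simp add: v_def; use e_3_24_26 in linarith)
  moreover have "F 25 4 = d0_coeff v 25 4" by (simp add: v_def; use e_3_25_10 in linarith)
  moreover have "F 25 21 = d0_coeff v 25 21" by (simp add: v_def; use e_3_8_2 e_8_25_19 e_12_27_23 e_5_12_6 in linarith)
  moreover have "F 25 22 = d0_coeff v 25 22" by (simp add: v_def; use e_13_25_24 in linarith)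
  moreover have "F 26 4 = d0_coeff v 26 4" by (simp add: v_def; use e_3_26_10 in linarith)
  moreover have "F 26 21 = d0_coeff v 26 21" by (simp add: v_def; use e_13_26_23 in linarith)
  moreover have "F 26 22 = d0_coeff v 26 22" by (simp add: v_def; use e_3_8_2 e_8_26_20 e_5_12_6 e_12_28_24 in linarith)
  moreover have "F 27 2 = d0_coeff v 27 2" by (simp add: v_def; use e_3_8_20 e_5_27_8 in linarith)
  moreover have "F 27 10 = d0_coeff v 27 10" by (simp add: v_def; use e_5_27_3 in linarith)
  moreover have "F 27 19 = d0_coeff v 27 19" by (simp add: v_def; use e_3_8_2 e_12_27_23 e_5_12_6 in linarith)
  moreover have "F 27 20 = d0_coeff v 27 20" by (simp add: v_def; use e_12_27_24 in linarith)
  moreover have "F 28 2 = d0_coeff v 28 2" by (simp add: v_def; use e_3_8_19 e_5_28_8 in linarith)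
  moreover have "F 28 10 = d0_coeff v 28 10" by (simp add: v_def; use e_5_28_3 in linarith)
  moreover have "F 28 19 = d0_coeff v 28 19" by (simp add: v_def; use e_12_28_23 in linarith)
  moreover have "F 28 20 = d0_coeff v 28 20" by (simp add: v_def; use e_3_8_2 e_5_12_6 e_12_28_24 in linarith)
  ultimately have "\<forall>i\<in>g3_m_index. \<forall>n<31. g3_deg n = g3_deg i + 3 \<longrightarrow> F i n = d0_coeff v i n"
    by (simp only: g3_m_index_eq ball_simps all_less_31_iff) (simp del: d0_coeff_def)
  then show ?thesis by (rule coboundary_coeffsI) (simp add: v_def)
qed

lemma cocycle_coeffs_exact_deg4:
  fixes F :: "nat \<Rightarrow> nat \<Rightarrow> real"
  assumes "cocycle_coeffs 4 F"
  shows "coboundary_coeffs 4 F"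
proof -
  note [simp] = cocycle_coeffs_vanish[OF assms] d1_coeff_def d0_coeff_def ad_coeff_def br_pair_def
    g3_row_eval g3_m_index_eq algebra_simps
  note e_3_5_2 = cocycle_coeffs_d1[OF assms, of 3 5 2, simplified]
    and e_3_5_10 = cocycle_coeffs_d1[OF assms, of 3 5 10, simplified]
    and e_3_6_14 = cocycle_coeffs_d1[OF assms, of 3 6 14, simplified]
    and e_3_6_15 = cocycle_coeffs_d1[OF assms, of 3 6 15, simplified]
    and e_3_6_16 = cocycle_coeffs_d1[OF assms, of 3 6 16, simplified]
    and e_3_12_3 = cocycle_coeffs_d1[OF assms, of 3 12 3, simplified]
    and e_3_13_5 = cocycle_coeffs_d1[OF assms, of 3 13 5, simplified]
    and e_3_13_27 = cocycle_coeffs_d1[OF assms, of 3 13 27, simplified]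
    and e_3_13_28 = cocycle_coeffs_d1[OF assms, of 3 13 28, simplified]
    and e_3_23_17 = cocycle_coeffs_d1[OF assms, of 3 23 17, simplified]
    and e_3_23_18 = cocycle_coeffs_d1[OF assms, of 3 23 18, simplified]
    and e_3_24_17 = cocycle_coeffs_d1[OF assms, of 3 24 17, simplified]
    and e_3_24_18 = cocycle_coeffs_d1[OF assms, of 3 24 18, simplified]
    and e_3_25_21 = cocycle_coeffs_d1[OF assms, of 3 25 21, simplified]
    and e_3_25_22 = cocycle_coeffs_d1[OF assms, of 3 25 22, simplified]
    and e_3_26_21 = cocycle_coeffs_d1[OF assms, of 3 26 21, simplified]
    and e_3_26_22 = cocycle_coeffs_d1[OF assms, of 3 26 22, simplified]
    and e_3_27_10 = cocycle_coeffs_d1[OF assms, of 3 27 10, simplified]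
    and e_3_28_10 = cocycle_coeffs_d1[OF assms, of 3 28 10, simplified]
    and e_5_6_25 = cocycle_coeffs_d1[OF assms, of 5 6 25, simplified]
    and e_5_6_26 = cocycle_coeffs_d1[OF assms, of 5 6 26, simplified]
    and e_5_12_5 = cocycle_coeffs_d1[OF assms, of 5 12 5, simplified]
    and e_5_12_27 = cocycle_coeffs_d1[OF assms, of 5 12 27, simplified]
    and e_5_12_28 = cocycle_coeffs_d1[OF assms, of 5 12 28, simplified]
    and e_5_13_6 = cocycle_coeffs_d1[OF assms, of 5 13 6, simplified]
    and e_5_23_8 = cocycle_coeffs_d1[OF assms, of 5 23 8, simplified]
    and e_5_23_25 = cocycle_coeffs_d1[OF assms, of 5 23 25, simplified]
    and e_5_24_8 = cocycle_coeffs_d1[OF assms, of 5 24 8, simplified]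
    and e_5_27_14 = cocycle_coeffs_d1[OF assms, of 5 27 14, simplified]
    and e_5_27_15 = cocycle_coeffs_d1[OF assms, of 5 27 15, simplified]
    and e_5_27_18 = cocycle_coeffs_d1[OF assms, of 5 27 18, simplified]
    and e_5_28_17 = cocycle_coeffs_d1[OF assms, of 5 28 17, simplified]
    and e_6_8_1 = cocycle_coeffs_d1[OF assms, of 6 8 1, simplified]
    and e_6_8_17 = cocycle_coeffs_d1[OF assms, of 6 8 17, simplified]
    and e_6_8_18 = cocycle_coeffs_d1[OF assms, of 6 8 18, simplified]
    and e_6_25_14 = cocycle_coeffs_d1[OF assms, of 6 25 14, simplified]
    and e_6_25_15 = cocycle_coeffs_d1[OF assms, of 6 25 15, simplified]
    and e_6_27_3 = cocycle_coeffs_d1[OF assms, of 6 27 3, simplified]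
    and e_6_28_3 = cocycle_coeffs_d1[OF assms, of 6 28 3, simplified]
    and e_13_25_5 = cocycle_coeffs_d1[OF assms, of 13 25 5, simplified]
    and e_13_26_5 = cocycle_coeffs_d1[OF assms, of 13 26 5, simplified]
    and e_27_27_15 = cocycle_coeffs_d1[OF assms, of 27 27 15, simplified]
    and e_28_28_16 = cocycle_coeffs_d1[OF assms, of 28 28 16, simplified]
  define v where "v l = (if l = 9 then - F 3 7 else 0)" for l :: nat
  have "F 3 7 = d0_coeff v 3 7" by (simp add: v_def; linarith)
  moreover have "F 3 29 = d0_coeff v 3 29" by (simp add: v_def; use e_3_13_27 in linarith)
  moreover have "F 3 30 = d0_coeff v 3 30" by (simp add: v_def; use e_3_13_28 in linarith)
  moreover have "F 5 4 = d0_coeff v 5 4" by (simp add: v_def; use e_5_23_25 in linarith)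
  moreover have "F 5 21 = d0_coeff v 5 21" by (simp add: v_def; use e_5_27_15 in linarith)
  moreover have "F 5 22 = d0_coeff v 5 22" by (simp add: v_def; use e_5_27_14 in linarith)
  moreover have "F 6 2 = d0_coeff v 6 2" by (simp add: v_def; use e_3_5_2 in linarith)
  moreover have "F 6 10 = d0_coeff v 6 10" by (simp add: v_def; use e_3_5_10 e_5_23_25 in linarith)
  moreover have "F 6 19 = d0_coeff v 6 19" by (simp add: v_def; use e_6_25_15 in linarith)
  moreover have "F 6 20 = d0_coeff v 6 20" by (simp add: v_def; use e_6_25_14 in linarith)
  moreover have "F 8 7 = d0_coeff v 8 7" by (simp add: v_def; use e_6_8_1 in linarith)
  moreover have "F 8 29 = d0_coeff v 8 29" by (simp add: v_def; use e_6_8_17 in linarith)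
  moreover have "F 8 30 = d0_coeff v 8 30" by (simp add: v_def; use e_6_8_18 in linarith)
  moreover have "F 12 0 = d0_coeff v 12 0" by (simp add: v_def; use e_3_12_3 in linarith)
  moreover have "F 12 1 = d0_coeff v 12 1" by (simp add: v_def; use e_3_12_3 e_5_12_5 in linarith)
  moreover have "F 12 14 = d0_coeff v 12 14" by (simp add: v_def; use e_3_6_14 in linarith)
  moreover have "F 12 15 = d0_coeff v 12 15" by (simp add: v_def; use e_3_6_15 in linarith)
  moreover have "F 12 16 = d0_coeff v 12 16" by (simp add: v_def; use e_3_6_16 in linarith)
  moreover have "F 12 17 = d0_coeff v 12 17" by (simp add: v_def; use e_5_12_27 in linarith)
  moreover have "F 12 18 = d0_coeff v 12 18" by (simp add: v_def; use e_5_12_28 in linarith)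
  moreover have "F 13 3 = d0_coeff v 13 3" by (simp add: v_def; use e_5_13_6 e_5_23_25 in linarith)
  moreover have "F 13 8 = d0_coeff v 13 8" by (simp add: v_def; use e_3_13_5 in linarith)
  moreover have "F 13 25 = d0_coeff v 13 25" by (simp add: v_def; use e_5_6_25 e_5_27_15 in linarith)
  moreover have "F 13 26 = d0_coeff v 13 26" by (simp add: v_def; use e_5_6_26 e_5_27_14 in linarith)
  moreover have "F 23 2 = d0_coeff v 23 2" by (simp add: v_def; use e_5_23_8 in linarith)
  moreover have "F 23 10 = d0_coeff v 23 10" by (simp add: v_def; use e_3_27_10 e_6_27_3 in linarith)
  moreover have "F 23 19 = d0_coeff v 23 19" by (simp add: v_def; use e_3_23_17 in linarith)
  moreover have "F 23 20 = d0_coeff v 23 20" by (simp add: v_def; use e_3_23_18 in linarith)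
  moreover have "F 24 2 = d0_coeff v 24 2" by (simp add: v_def; use e_5_24_8 in linarith)
  moreover have "F 24 10 = d0_coeff v 24 10" by (simp add: v_def; use e_3_28_10 e_6_28_3 in linarith)
  moreover have "F 24 19 = d0_coeff v 24 19" by (simp add: v_def; use e_3_24_17 in linarith)
  moreover have "F 24 20 = d0_coeff v 24 20" by (simp add: v_def; use e_3_24_18 in linarith)
  moreover have "F 25 7 = d0_coeff v 25 7" by (simp add: v_def; use e_13_25_5 in linarith)
  moreover have "F 25 29 = d0_coeff v 25 29" by (simp add: v_def; use e_3_25_21 in linarith)
  moreover have "F 25 30 = d0_coeff v 25 30" by (simp add: v_def; use e_3_25_22 in linarith)
  moreover have "F 26 7 = d0_coeff v 26 7" by (simp add: v_def; use e_13_26_5 in linarith)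
  moreover have "F 26 29 = d0_coeff v 26 29" by (simp add: v_def; use e_3_26_21 in linarith)
  moreover have "F 26 30 = d0_coeff v 26 30" by (simp add: v_def; use e_3_26_22 in linarith)
  moreover have "F 27 4 = d0_coeff v 27 4" by (simp add: v_def; use e_6_27_3 in linarith)
  moreover have "F 27 21 = d0_coeff v 27 21" by (simp add: v_def; use e_27_27_15 in linarith)
  moreover have "F 27 22 = d0_coeff v 27 22" by (simp add: v_def; use e_5_27_18 in linarith)
  moreover have "F 28 4 = d0_coeff v 28 4" by (simp add: v_def; use e_6_28_3 in linarith)
  moreover have "F 28 21 = d0_coeff v 28 21" by (simp add: v_def; use e_5_28_17 in linarith)
  moreover have "F 28 22 = d0_coeff v 28 22" by (simp add: v_def; use e_28_28_16 in linarith)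
  ultimately have "\<forall>i\<in>g3_m_index. \<forall>n<31. g3_deg n = g3_deg i + 4 \<longrightarrow> F i n = d0_coeff v i n"
    by (simp only: g3_m_index_eq ball_simps all_less_31_iff) (simp del: d0_coeff_def)
  then show ?thesis by (rule coboundary_coeffsI) (simp add: v_def)
qed

lemma cocycle_coeffs_exact_deg5:
  fixes F :: "nat \<Rightarrow> nat \<Rightarrow> real"
  assumes "cocycle_coeffs 5 F"
  shows "coboundary_coeffs 5 F"
proof -
  note [simp] = cocycle_coeffs_vanish[OF assms] d1_coeff_def d0_coeff_def ad_coeff_def br_pair_def
    g3_row_eval g3_m_index_eq algebra_simps
  note e_3_5_4 = cocycle_coeffs_d1[OF assms, of 3 5 4, simplified]
    and e_3_6_10 = cocycle_coeffs_d1[OF assms, of 3 6 10, simplified]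
    and e_3_6_19 = cocycle_coeffs_d1[OF assms, of 3 6 19, simplified]
    and e_3_6_20 = cocycle_coeffs_d1[OF assms, of 3 6 20, simplified]
    and e_3_8_7 = cocycle_coeffs_d1[OF assms, of 3 8 7, simplified]
    and e_3_8_29 = cocycle_coeffs_d1[OF assms, of 3 8 29, simplified]
    and e_3_8_30 = cocycle_coeffs_d1[OF assms, of 3 8 30, simplified]
    and e_3_13_3 = cocycle_coeffs_d1[OF assms, of 3 13 3, simplified]
    and e_3_13_8 = cocycle_coeffs_d1[OF assms, of 3 13 8, simplified]
    and e_3_13_25 = cocycle_coeffs_d1[OF assms, of 3 13 25, simplified]
    and e_3_13_26 = cocycle_coeffs_d1[OF assms, of 3 13 26, simplified]
    and e_3_23_10 = cocycle_coeffs_d1[OF assms, of 3 23 10, simplified]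
    and e_3_24_10 = cocycle_coeffs_d1[OF assms, of 3 24 10, simplified]
    and e_3_25_7 = cocycle_coeffs_d1[OF assms, of 3 25 7, simplified]
    and e_3_26_7 = cocycle_coeffs_d1[OF assms, of 3 26 7, simplified]
    and e_3_27_21 = cocycle_coeffs_d1[OF assms, of 3 27 21, simplified]
    and e_3_28_22 = cocycle_coeffs_d1[OF assms, of 3 28 22, simplified]
    and e_5_6_14 = cocycle_coeffs_d1[OF assms, of 5 6 14, simplified]
    and e_5_6_15 = cocycle_coeffs_d1[OF assms, of 5 6 15, simplified]
    and e_5_6_16 = cocycle_coeffs_d1[OF assms, of 5 6 16, simplified]
    and e_5_12_8 = cocycle_coeffs_d1[OF assms, of 5 12 8, simplified]
    and e_5_23_17 = cocycle_coeffs_d1[OF assms, of 5 23 17, simplified]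
    and e_5_23_18 = cocycle_coeffs_d1[OF assms, of 5 23 18, simplified]
    and e_5_24_17 = cocycle_coeffs_d1[OF assms, of 5 24 17, simplified]
    and e_5_24_18 = cocycle_coeffs_d1[OF assms, of 5 24 18, simplified]
    and e_5_27_20 = cocycle_coeffs_d1[OF assms, of 5 27 20, simplified]
    and e_5_28_19 = cocycle_coeffs_d1[OF assms, of 5 28 19, simplified]
    and e_6_8_19 = cocycle_coeffs_d1[OF assms, of 6 8 19, simplified]
    and e_6_8_20 = cocycle_coeffs_d1[OF assms, of 6 8 20, simplified]
    and e_6_13_6 = cocycle_coeffs_d1[OF assms, of 6 13 6, simplified]
    and e_8_25_7 = cocycle_coeffs_d1[OF assms, of 8 25 7, simplified]
    and e_8_26_7 = cocycle_coeffs_d1[OF assms, of 8 26 7, simplified]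
  define v where "v l = (if l = 11 then - F 5 7 else 0)" for l :: nat
  have "F 3 9 = d0_coeff v 3 9" by (simp add: v_def; use e_3_13_8 in linarith)
  moreover have "F 5 7 = d0_coeff v 5 7" by (simp add: v_def; linarith)
  moreover have "F 5 29 = d0_coeff v 5 29" by (simp add: v_def; use e_3_8_29 in linarith)
  moreover have "F 5 30 = d0_coeff v 5 30" by (simp add: v_def; use e_3_8_30 in linarith)
  moreover have "F 6 4 = d0_coeff v 6 4" by (simp add: v_def; use e_3_5_4 in linarith)
  moreover have "F 6 21 = d0_coeff v 6 21" by (simp add: v_def; use e_6_8_19 in linarith)
  moreover have "F 6 22 = d0_coeff v 6 22" by (simp add: v_def; use e_6_8_20 in linarith)
  moreover have "F 8 9 = d0_coeff v 8 9" by (simp add: v_def; use e_3_8_7 in linarith)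
  moreover have "F 12 2 = d0_coeff v 12 2" by (simp add: v_def; use e_5_12_8 in linarith)
  moreover have "F 12 10 = d0_coeff v 12 10" by (simp add: v_def; use e_3_5_4 e_3_6_10 in linarith)
  moreover have "F 12 19 = d0_coeff v 12 19" by (simp add: v_def; use e_3_6_19 in linarith)
  moreover have "F 12 20 = d0_coeff v 12 20" by (simp add: v_def; use e_3_6_20 in linarith)
  moreover have "F 13 0 = d0_coeff v 13 0" by (simp add: v_def; use e_3_13_3 in linarith)
  moreover have "F 13 1 = d0_coeff v 13 1" by (simp add: v_def; use e_3_5_4 e_6_13_6 in linarith)
  moreover have "F 13 14 = d0_coeff v 13 14" by (simp add: v_def; use e_5_6_14 in linarith)
  moreover have "F 13 15 = d0_coeff v 13 15" by (simp add: v_def; use e_5_6_15 in linarith)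
  moreover have "F 13 16 = d0_coeff v 13 16" by (simp add: v_def; use e_5_6_16 in linarith)
  moreover have "F 13 17 = d0_coeff v 13 17" by (simp add: v_def; use e_3_13_25 in linarith)
  moreover have "F 13 18 = d0_coeff v 13 18" by (simp add: v_def; use e_3_13_26 in linarith)
  moreover have "F 23 4 = d0_coeff v 23 4" by (simp add: v_def; use e_3_23_10 in linarith)
  moreover have "F 23 21 = d0_coeff v 23 21" by (simp add: v_def; use e_5_23_17 in linarith)
  moreover have "F 23 22 = d0_coeff v 23 22" by (simp add: v_def; use e_5_23_18 in linarith)
  moreover have "F 24 4 = d0_coeff v 24 4" by (simp add: v_def; use e_3_24_10 in linarith)
  moreover have "F 24 21 = d0_coeff v 24 21" by (simp add: v_def; use e_5_24_17 in linarith)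
  moreover have "F 24 22 = d0_coeff v 24 22" by (simp add: v_def; use e_5_24_18 in linarith)
  moreover have "F 25 9 = d0_coeff v 25 9" by (simp add: v_def; use e_3_25_7 in linarith)
  moreover have "F 26 9 = d0_coeff v 26 9" by (simp add: v_def; use e_3_26_7 in linarith)
  moreover have "F 27 7 = d0_coeff v 27 7" by (simp add: v_def; use e_8_25_7 in linarith)
  moreover have "F 27 29 = d0_coeff v 27 29" by (simp add: v_def; use e_5_23_17 e_3_27_21 in linarith)
  moreover have "F 27 30 = d0_coeff v 27 30" by (simp add: v_def; use e_5_27_20 in linarith)
  moreover have "F 28 7 = d0_coeff v 28 7" by (simp add: v_def; use e_8_26_7 in linarith)
  moreover have "F 28 29 = d0_coeff v 28 29" by (simp add: v_def; use e_5_28_19 in linarith)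
  moreover have "F 28 30 = d0_coeff v 28 30" by (simp add: v_def; use e_5_24_18 e_3_28_22 in linarith)
  ultimately have "\<forall>i\<in>g3_m_index. \<forall>n<31. g3_deg n = g3_deg i + 5 \<longrightarrow> F i n = d0_coeff v i n"
    by (simp only: g3_m_index_eq ball_simps all_less_31_iff) (simp del: d0_coeff_def)
  then show ?thesis by (rule coboundary_coeffsI) (simp add: v_def)
qed

lemma cocycle_coeffs_exact_deg6:
  fixes F :: "nat \<Rightarrow> nat \<Rightarrow> real"
  assumes "cocycle_coeffs 6 F"
  shows "coboundary_coeffs 6 F"
proof -
  note [simp] = cocycle_coeffs_vanish[OF assms] d1_coeff_def d0_coeff_def ad_coeff_def br_pair_def
    g3_row_eval g3_m_index_eq algebra_simps
  note e_3_5_29 = cocycle_coeffs_d1[OF assms, of 3 5 29, simplified]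
    and e_3_5_30 = cocycle_coeffs_d1[OF assms, of 3 5 30, simplified]
    and e_3_8_9 = cocycle_coeffs_d1[OF assms, of 3 8 9, simplified]
    and e_3_12_10 = cocycle_coeffs_d1[OF assms, of 3 12 10, simplified]
    and e_3_13_0 = cocycle_coeffs_d1[OF assms, of 3 13 0, simplified]
    and e_3_13_17 = cocycle_coeffs_d1[OF assms, of 3 13 17, simplified]
    and e_3_13_18 = cocycle_coeffs_d1[OF assms, of 3 13 18, simplified]
    and e_3_23_4 = cocycle_coeffs_d1[OF assms, of 3 23 4, simplified]
    and e_3_23_22 = cocycle_coeffs_d1[OF assms, of 3 23 22, simplified]
    and e_3_24_4 = cocycle_coeffs_d1[OF assms, of 3 24 4, simplified]
    and e_3_24_21 = cocycle_coeffs_d1[OF assms, of 3 24 21, simplified]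
    and e_3_27_7 = cocycle_coeffs_d1[OF assms, of 3 27 7, simplified]
    and e_3_28_7 = cocycle_coeffs_d1[OF assms, of 3 28 7, simplified]
    and e_5_6_10 = cocycle_coeffs_d1[OF assms, of 5 6 10, simplified]
    and e_5_8_7 = cocycle_coeffs_d1[OF assms, of 5 8 7, simplified]
    and e_5_12_17 = cocycle_coeffs_d1[OF assms, of 5 12 17, simplified]
    and e_5_12_18 = cocycle_coeffs_d1[OF assms, of 5 12 18, simplified]
    and e_5_25_7 = cocycle_coeffs_d1[OF assms, of 5 25 7, simplified]
    and e_5_26_7 = cocycle_coeffs_d1[OF assms, of 5 26 7, simplified]
    and e_6_25_21 = cocycle_coeffs_d1[OF assms, of 6 25 21, simplified]
    and e_12_27_17 = cocycle_coeffs_d1[OF assms, of 12 27 17, simplified]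
    and e_23_23_15 = cocycle_coeffs_d1[OF assms, of 23 23 15, simplified]
    and e_24_24_16 = cocycle_coeffs_d1[OF assms, of 24 24 16, simplified]
  have "F 3 11 = 0" by (use e_3_12_10 e_12_27_17 in linarith)
  moreover have "F 5 9 = 0" by (use e_3_12_10 e_12_27_17 e_3_8_9 in linarith)
  moreover have "F 6 7 = 0" by (use e_6_25_21 in linarith)
  moreover have "F 6 29 = 0" by (use e_3_5_29 in linarith)
  moreover have "F 6 30 = 0" by (use e_3_5_30 in linarith)
  moreover have "F 8 11 = 0" by (use e_5_8_7 in linarith)
  moreover have "F 12 4 = 0" by (use e_12_27_17 in linarith)
  moreover have "F 12 21 = 0" by (use e_5_12_17 in linarith)
  moreover have "F 12 22 = 0" by (use e_5_12_18 in linarith)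
  moreover have "F 13 2 = 0" by (use e_3_13_0 in linarith)
  moreover have "F 13 10 = 0" by (use e_5_6_10 in linarith)
  moreover have "F 13 19 = 0" by (use e_3_13_17 in linarith)
  moreover have "F 13 20 = 0" by (use e_3_13_18 in linarith)
  moreover have "F 23 7 = 0" by (use e_3_23_4 in linarith)
  moreover have "F 23 29 = 0" by (use e_23_23_15 in linarith)
  moreover have "F 23 30 = 0" by (use e_3_23_22 in linarith)
  moreover have "F 24 7 = 0" by (use e_3_24_4 in linarith)
  moreover have "F 24 29 = 0" by (use e_3_24_21 in linarith)
  moreover have "F 24 30 = 0" by (use e_24_24_16 in linarith)
  moreover have "F 25 11 = 0" by (use e_5_25_7 e_3_23_4 in linarith)
  moreover have "F 26 11 = 0" by (use e_5_26_7 e_3_24_4 in linarith)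
  moreover have "F 27 9 = 0" by (use e_3_27_7 e_3_23_4 in linarith)
  moreover have "F 28 9 = 0" by (use e_3_28_7 e_3_24_4 in linarith)
  ultimately have "\<forall>i\<in>g3_m_index. \<forall>n<31. g3_deg n = g3_deg i + 6 \<longrightarrow> F i n = 0"
    by (simp only: g3_m_index_eq ball_simps all_less_31_iff) simp
  then show ?thesis by (rule coboundary_coeffs_zeroI)
qed

lemma cocycle_coeffs_exact_deg7:
  fixes F :: "nat \<Rightarrow> nat \<Rightarrow> real"
  assumes "cocycle_coeffs 7 F"
  shows "coboundary_coeffs 7 F"
proof -
  note [simp] = cocycle_coeffs_vanish[OF assms] d1_coeff_def d0_coeff_def ad_coeff_def br_pair_def
    g3_row_eval g3_m_index_eq algebra_simps
  note e_3_5_9 = cocycle_coeffs_d1[OF assms, of 3 5 9, simplified]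
    and e_3_6_29 = cocycle_coeffs_d1[OF assms, of 3 6 29, simplified]
    and e_3_6_30 = cocycle_coeffs_d1[OF assms, of 3 6 30, simplified]
    and e_3_8_11 = cocycle_coeffs_d1[OF assms, of 3 8 11, simplified]
    and e_3_12_4 = cocycle_coeffs_d1[OF assms, of 3 12 4, simplified]
    and e_3_13_10 = cocycle_coeffs_d1[OF assms, of 3 13 10, simplified]
    and e_3_23_7 = cocycle_coeffs_d1[OF assms, of 3 23 7, simplified]
    and e_3_24_7 = cocycle_coeffs_d1[OF assms, of 3 24 7, simplified]
    and e_5_6_21 = cocycle_coeffs_d1[OF assms, of 5 6 21, simplified]
    and e_5_6_22 = cocycle_coeffs_d1[OF assms, of 5 6 22, simplified]
    and e_5_27_7 = cocycle_coeffs_d1[OF assms, of 5 27 7, simplified]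
    and e_5_28_7 = cocycle_coeffs_d1[OF assms, of 5 28 7, simplified]
  have "F 5 11 = 0" by (use e_3_8_11 in linarith)
  moreover have "F 6 9 = 0" by (use e_3_5_9 in linarith)
  moreover have "F 12 7 = 0" by (use e_3_12_4 in linarith)
  moreover have "F 12 29 = 0" by (use e_3_6_29 in linarith)
  moreover have "F 12 30 = 0" by (use e_3_6_30 in linarith)
  moreover have "F 13 4 = 0" by (use e_3_13_10 in linarith)
  moreover have "F 13 21 = 0" by (use e_5_6_21 in linarith)
  moreover have "F 13 22 = 0" by (use e_5_6_22 in linarith)
  moreover have "F 23 9 = 0" by (use e_3_23_7 in linarith)
  moreover have "F 24 9 = 0" by (use e_3_24_7 in linarith)
  moreover have "F 27 11 = 0" by (use e_5_27_7 in linarith)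
  moreover have "F 28 11 = 0" by (use e_5_28_7 in linarith)
  ultimately have "\<forall>i\<in>g3_m_index. \<forall>n<31. g3_deg n = g3_deg i + 7 \<longrightarrow> F i n = 0"
    by (simp only: g3_m_index_eq ball_simps all_less_31_iff) simp
  then show ?thesis by (rule coboundary_coeffs_zeroI)
qed

lemma cocycle_coeffs_exact_deg8:
  fixes F :: "nat \<Rightarrow> nat \<Rightarrow> real"
  assumes "cocycle_coeffs 8 F"
  shows "coboundary_coeffs 8 F"
proof -
  note [simp] = cocycle_coeffs_vanish[OF assms] d1_coeff_def d0_coeff_def ad_coeff_def br_pair_def
    g3_row_eval g3_m_index_eq algebra_simps
  note e_3_5_11 = cocycle_coeffs_d1[OF assms, of 3 5 11, simplified]
    and e_3_6_9 = cocycle_coeffs_d1[OF assms, of 3 6 9, simplified]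
    and e_3_13_4 = cocycle_coeffs_d1[OF assms, of 3 13 4, simplified]
    and e_3_13_21 = cocycle_coeffs_d1[OF assms, of 3 13 21, simplified]
    and e_3_13_22 = cocycle_coeffs_d1[OF assms, of 3 13 22, simplified]
    and e_3_27_11 = cocycle_coeffs_d1[OF assms, of 3 27 11, simplified]
    and e_3_28_11 = cocycle_coeffs_d1[OF assms, of 3 28 11, simplified]
  have "F 6 11 = 0" by (use e_3_5_11 in linarith)
  moreover have "F 12 9 = 0" by (use e_3_6_9 in linarith)
  moreover have "F 13 7 = 0" by (use e_3_13_4 in linarith)
  moreover have "F 13 29 = 0" by (use e_3_13_21 in linarith)
  moreover have "F 13 30 = 0" by (use e_3_13_22 in linarith)
  moreover have "F 23 11 = 0" by (use e_3_27_11 in linarith)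
  moreover have "F 24 11 = 0" by (use e_3_28_11 in linarith)
  ultimately have "\<forall>i\<in>g3_m_index. \<forall>n<31. g3_deg n = g3_deg i + 8 \<longrightarrow> F i n = 0"
    by (simp only: g3_m_index_eq ball_simps all_less_31_iff) simp
  then show ?thesis by (rule coboundary_coeffs_zeroI)
qed

lemma cocycle_coeffs_exact_deg9:
  fixes F :: "nat \<Rightarrow> nat \<Rightarrow> real"
  assumes "cocycle_coeffs 9 F"
  shows "coboundary_coeffs 9 F"
proof -
  note [simp] = cocycle_coeffs_vanish[OF assms] d1_coeff_def d0_coeff_def ad_coeff_def br_pair_def
    g3_row_eval g3_m_index_eq algebra_simps
  note e_3_6_11 = cocycle_coeffs_d1[OF assms, of 3 6 11, simplified]
    and e_3_13_7 = cocycle_coeffs_d1[OF assms, of 3 13 7, simplified]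
  have "F 12 11 = 0" by (use e_3_6_11 in linarith)
  moreover have "F 13 9 = 0" by (use e_3_13_7 in linarith)
  ultimately have "\<forall>i\<in>g3_m_index. \<forall>n<31. g3_deg n = g3_deg i + 9 \<longrightarrow> F i n = 0"
    by (simp only: g3_m_index_eq ball_simps all_less_31_iff) simp
  then show ?thesis by (rule coboundary_coeffs_zeroI)
qed

lemma cocycle_coeffs_exact_deg10:
  fixes F :: "nat \<Rightarrow> nat \<Rightarrow> real"
  assumes "cocycle_coeffs 10 F"
  shows "coboundary_coeffs 10 F"
proof -
  note [simp] = cocycle_coeffs_vanish[OF assms] d1_coeff_def d0_coeff_def ad_coeff_def br_pair_def
    g3_row_eval g3_m_index_eq algebra_simps
  note e_5_6_11 = cocycle_coeffs_d1[OF assms, of 5 6 11, simplified]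
  have "F 13 11 = 0" by (use e_5_6_11 in linarith)
  then have "\<forall>i\<in>g3_m_index. \<forall>n<31. g3_deg n = g3_deg i + 10 \<longrightarrow> F i n = 0"
    by (simp only: g3_m_index_eq ball_simps all_less_31_iff) simp
  then show ?thesis by (rule coboundary_coeffs_zeroI)
qed

lemma cocycle_coeffs_exact:
  fixes F :: "nat \<Rightarrow> nat \<Rightarrow> real"
  assumes "0 \<le> d" and "cocycle_coeffs d F"
  shows "coboundary_coeffs d F"
proof -
  have "d = 0 \<or> d = 1 \<or> d = 2 \<or> d = 3 \<or> d = 4 \<or> d = 5 \<or> d = 6 \<or> d = 7 \<or> d = 8 \<or> d = 9 \<or> d = 10 \<or> 10 < d"
    using assms(1) by presburger
  then show ?thesis
    using assms(2) cocycle_coeffs_exact_deg0 cocycle_coeffs_exact_deg1 cocycle_coeffs_exact_deg2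
      cocycle_coeffs_exact_deg3 cocycle_coeffs_exact_deg4 cocycle_coeffs_exact_deg5 cocycle_coeffs_exact_deg6
      cocycle_coeffs_exact_deg7 cocycle_coeffs_exact_deg8 cocycle_coeffs_exact_deg9 cocycle_coeffs_exact_deg10
      coboundary_coeffs_deg_gt_10
    by blast
qed

theorem corollaryA2:
  fixes d :: int
  assumes "0 \<le> d"
  shows "g3_Z1 d \<subseteq> g3_B1 d"
proof
  fix \<phi> assume \<phi>: "\<phi> \<in> g3_Z1 d"
  let ?F = "\<lambda>a b. \<phi> (g3_basis a) b"
  have "cocycle_coeffs d ?F" using \<phi> by (rule g3_Z1_cocycle_coeffs)
  then have "coboundary_coeffs d (\<lambda>a b. Re (?F a b))" and "coboundary_coeffs d (\<lambda>a b. Im (?F a b))"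
    using cocycle_coeffs_linear[OF bounded_linear.linear[OF bounded_linear_Re]]
      cocycle_coeffs_linear[OF bounded_linear.linear[OF bounded_linear_Im]]
      cocycle_coeffs_exact[OF assms]
    by blast+
  then have "coboundary_coeffs d ?F" by (rule coboundary_coeffs_Re_Im)
  moreover have "\<phi> \<in> g3_C1 d" using \<phi> by (simp add: g3_Z1_def)
  ultimately show "\<phi> \<in> g3_B1 d" by (intro g3_B1_if_coboundary_coeffs)
qed

end
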